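(* Let $\mathcal D$ be a finite nonempty set. There exists a unique bilinear form $(\,,\,)$ on $\mathcal H^{\mathcal D}_{P,R}$ such that: (1) $(1,x)=\varepsilon(x)$ for all $x$; (2) $(x_1x_2,y)=(x_1\otimes x_2,\Delta(y))$ for all $x_1,x_2,y$ (where $(a\otimes b,c\otimes d)=(a,c)(b,d)$); (3) $(B_d^+(x),y)=(x,\gamma_d(y))$ for all $x,y$ and $d\in\mathcal D$. Moreover this form satisfies: (4) $(x,y)=0$ if $x,y$ are homogeneous of different weights; (5) it is symmetric and nondegenerate; (6) $(S(x),y)=(x,S(y))$ for all $x,y$, $S$ the antipode; (7) letting $(e_F)_{F}$ be the basis of $\mathcal H^{\mathcal D}_{P,R}$ indexed by planar forests defined by $(e_F,G)=\delta_{F,G}$ for all forests $G$: (a) $e_F$ is homogeneous of weight equal to the weight of $F$; (b) $(e_t)_{t}$, $t$ running over the decorated planar rooted trees, is a basis of the space of primitive elements of $\mathcal H^{\mathcal D}_{P,R}$; (c) for every forest $t_1\cdots t_n$, $\Delta(e_{t_1\cdots t_n})=\sum_{i=0}^ne_{t_1\cdots t_i}\otimes e_{t_{i+1}\cdots t_n}$.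
   Context: $\mathcal H^{\mathcal D}_{P,R}$ is the free associative unital $\mathbb Q$-algebra on the set of planar rooted trees (finite trees with a root, embedded in the plane, edges oriented away from the root) decorated by $\mathcal D$; its basis is the set of planar forests $t_1\cdots t_n$ ($1$ = empty forest), graded by weight (number of vertices). Coproduct: $\Delta(F)=\sum_cP^c(F)\otimes R^c(F)$ over all cuts $c=(c_i)$ of $F=t_1\cdots t_n$, each $c_i$ being the empty cut of $t_i$ ($P=1,R=t_i$), the total cut ($P=t_i,R=1$), or an admissible cut (a nonempty set of edges of $t_i$ such that every oriented path meets at most one of them, with $R^{c_i}(t_i)$ the component of the root and $P^{c_i}(t_i)$ the left-to-right planar forest of the other components); $P^c(F)=\prod_iP^{c_i}(t_i)$, $R^c(F)=\prod_iR^{c_i}(t_i)$. Counit $\varepsilon(F)=0$ for $F\neq1$, $\varepsilon(1)=1$. This is a Hopf algebra with antipode $S$. $B_d^+$ grafts $t_1\cdots t_n$ (in this order) on a new root decorated by $d$; $\bullet_d=B_d^+(1)$. The linear map $\gamma_d$ is given by $\gamma_d(1)=0$, $\gamma_d(t_1\cdots t_n)=t_1\cdots t_{n-1}$ if $t_n=\bullet_d$, and $0$ otherwise. *)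

theory Defs
  imports Complex_Main "HOL-Library.Poly_Mapping"
begin

text \<open>A planar forest is a list of trees; [] is the
  empty forest 1. The decoration set D is the finite (nonempty) type 'd.\<close>

datatype 'd ptree = Node 'd "'d ptree list"

type_synonym 'd forest = "'d ptree list"

fun weight_t :: "'d ptree \<Rightarrow> nat" where
  "weight_t (Node d ts) = Suc (sum_list (map weight_t ts))"

definition weight :: "'d forest \<Rightarrow> nat" where
  "weight F = sum_list (map weight_t F)"

fun combine_cuts :: "('d forest \<times> 'd forest) list list \<Rightarrow> ('d forest \<times> 'd forest) list" where
  "combine_cuts [] = [([], [])]"
| "combine_cuts (cs # css) =
     concat (map (\<lambda>(p, r). map (\<lambda>(p', r'). (p @ p', r @ r')) (combine_cuts css)) cs)"

text \<open>All cuts of a tree t (empty, total, admissible), listed as pairs (P^c(t), R^c(t)),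
  one list entry per cut. The non-total cuts of
  Node d [t1..tk] correspond bijectively to choosing, for each child ti, either to cut the
  edge to ti (= total cut of ti: ti goes into P, nothing of it stays on the trunk) or not
  to cut it (= a non-total cut of ti); admissibility is exactly this condition.
  P is the left-to-right forest of the cut-off components, R = Node d (trunk parts).\<close>
fun cuts :: "'d ptree \<Rightarrow> ('d forest \<times> 'd forest) list" where
  "cuts (Node d ts) =
     ([Node d ts], []) # map (\<lambda>(p, r). (p, [Node d r])) (combine_cuts (map cuts ts))"

definition cuts_forest :: "'d forest \<Rightarrow> ('d forest \<times> 'd forest) list" where
  "cuts_forest F = combine_cuts (map cuts F)"

type_synonym 'd H = "'d forest \<Rightarrow>\<^sub>0 rat"
type_synonym 'd HH = "('d forest \<times> 'd forest) \<Rightarrow>\<^sub>0 rat"   \<comment> \<open>H \<otimes> H\<close>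

definition smult :: "rat \<Rightarrow> ('a \<Rightarrow>\<^sub>0 rat) \<Rightarrow> ('a \<Rightarrow>\<^sub>0 rat)" where
  "smult c x = Poly_Mapping.map (\<lambda>v. c * v) x"

definition basis :: "'d forest \<Rightarrow> 'd H" where
  "basis F = Poly_Mapping.single F 1"

definition one :: "'d H" where
  "one = basis []"

definition mult :: "'d H \<Rightarrow> 'd H \<Rightarrow> 'd H" where
  "mult x y = (\<Sum>F\<in>Poly_Mapping.keys x. \<Sum>G\<in>Poly_Mapping.keys y.
       Poly_Mapping.single (F @ G) (Poly_Mapping.lookup x F * Poly_Mapping.lookup y G))"

definition tensor :: "'d H \<Rightarrow> 'd H \<Rightarrow> 'd HH" where
  "tensor x y = (\<Sum>F\<in>Poly_Mapping.keys x. \<Sum>G\<in>Poly_Mapping.keys y.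
       Poly_Mapping.single (F, G) (Poly_Mapping.lookup x F * Poly_Mapping.lookup y G))"

definition Delta :: "'d H \<Rightarrow> 'd HH" where
  "Delta x = (\<Sum>F\<in>Poly_Mapping.keys x. smult (Poly_Mapping.lookup x F)
       (sum_list (map (\<lambda>c. Poly_Mapping.single c 1) (cuts_forest F))))"

definition eps :: "'d H \<Rightarrow> rat" where
  "eps x = Poly_Mapping.lookup x []"

definition Bplus :: "'d \<Rightarrow> 'd H \<Rightarrow> 'd H" where
  "Bplus d x = (\<Sum>F\<in>Poly_Mapping.keys x. Poly_Mapping.single [Node d F] (Poly_Mapping.lookup x F))"

definition gamma :: "'d \<Rightarrow> 'd H \<Rightarrow> 'd H" where
  "gamma d x = (\<Sum>F\<in>Poly_Mapping.keys x.
       if F \<noteq> [] \<and> last F = Node d [] then Poly_Mapping.single (butlast F) (Poly_Mapping.lookup x F)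
       else 0)"

definition linear_map :: "(('a \<Rightarrow>\<^sub>0 rat) \<Rightarrow> ('b \<Rightarrow>\<^sub>0 rat)) \<Rightarrow> bool" where
  "linear_map f \<longleftrightarrow> (\<forall>x y. f (x + y) = f x + f y) \<and> (\<forall>c x. f (smult c x) = smult c (f x))"

definition conv :: "('d H \<Rightarrow> 'd H) \<Rightarrow> ('d H \<Rightarrow> 'd H) \<Rightarrow> 'd H \<Rightarrow> 'd H" where
  "conv f g x = (\<Sum>pr\<in>Poly_Mapping.keys (Delta x).
       smult (Poly_Mapping.lookup (Delta x) pr) (mult (f (basis (fst pr))) (g (basis (snd pr)))))"

definition is_antipode :: "('d H \<Rightarrow> 'd H) \<Rightarrow> bool" where
  "is_antipode S \<longleftrightarrow> linear_map S \<and>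
     (\<forall>x. conv S id x = smult (eps x) one) \<and> (\<forall>x. conv id S x = smult (eps x) one)"

definition antipode :: "'d H \<Rightarrow> 'd H" where
  "antipode = (THE S. is_antipode S)"

definition primitive :: "'d H \<Rightarrow> bool" where
  "primitive x \<longleftrightarrow> Delta x = tensor x one + tensor one x"

definition homogeneous :: "nat \<Rightarrow> 'd H \<Rightarrow> bool" where
  "homogeneous n x \<longleftrightarrow> (\<forall>F\<in>Poly_Mapping.keys x. weight F = n)"

definition bilinear_form :: "('d H \<Rightarrow> 'd H \<Rightarrow> rat) \<Rightarrow> bool" where
  "bilinear_form B \<longleftrightarrow>
     (\<forall>x y z. B (x + y) z = B x z + B y z) \<and> (\<forall>c x z. B (smult c x) z = c * B x z) \<and>
     (\<forall>x y z. B z (x + y) = B z x + B z y) \<and> (\<forall>c x z. B z (smult c x) = c * B z x)"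

definition pair2 :: "('d H \<Rightarrow> 'd H \<Rightarrow> rat) \<Rightarrow> 'd H \<Rightarrow> 'd H \<Rightarrow> 'd HH \<Rightarrow> rat" where
  "pair2 B x1 x2 T = (\<Sum>pr\<in>Poly_Mapping.keys T.
       Poly_Mapping.lookup T pr * B x1 (basis (fst pr)) * B x2 (basis (snd pr)))"

definition form_axioms :: "('d H \<Rightarrow> 'd H \<Rightarrow> rat) \<Rightarrow> bool" where
  "form_axioms B \<longleftrightarrow> bilinear_form B \<and>
     (\<forall>x. B one x = eps x) \<and>
     (\<forall>x1 x2 y. B (mult x1 x2) y = pair2 B x1 x2 (Delta y)) \<and>
     (\<forall>d x y. B (Bplus d x) y = B x (gamma d y))"

definition lincomb :: "('i \<Rightarrow>\<^sub>0 rat) \<Rightarrow> ('i \<Rightarrow> 'd H) \<Rightarrow> 'd H" where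
  "lincomb c e = (\<Sum>i\<in>Poly_Mapping.keys c. smult (Poly_Mapping.lookup c i) (e i))"

definition is_basis_of :: "'d H set \<Rightarrow> ('i \<Rightarrow> 'd H) \<Rightarrow> bool" where
  "is_basis_of V e \<longleftrightarrow> (\<forall>i. e i \<in> V) \<and> (\<forall>x\<in>V. \<exists>!c. x = lincomb c e)"

end

(* The axioms determine the form on basis forests by recursion on the left argument:
   (1, G) = eps G,  (B_d^+ F, G) = (F, gamma_d G),  and  (t F, G) = sum over the cuts c of G of
   (t, P^c G) (F, R^c G).  Taking this recursion as the definition gives existence and uniqueness.
   Coassociativity of the cuts yields (F F', G) = (F \<otimes> F', Delta G) for arbitrary concatenations,
   and the same recursion then turns out to hold in the second argument, whence symmetry. Cuts
   preserve weight, so forests of different weights are orthogonal.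

   For nondegeneracy, the involution dual_forest maps F to the dualised subforest of the last tree
   of F followed by a new root carrying the dualised rest of F. Then (F, dual_forest F) = 1, and
   (F, K) \<noteq> 0 forces K to lie below dual_forest F in a partial order on forests of equal weight.
   As there are finitely many decorations, each homogeneous component is finite dimensional and the
   pairing matrix is unitriangular there, so the dual basis e_F exists. The coproduct of e_F is
   dual to concatenation of forests, and a primitive element is orthogonal to every forest that is
   not a single tree.

   Finally, bilinear forms on forests form a monoid under the convolution dual to cutting both
   arguments; in it both (S F, G) and (F, S G) are inverses of the pairing, so they agree. *)

theory Submission
  imports Defs
begin

lemma sum_list_swap:
  fixes f :: "'a \<Rightarrow> 'b \<Rightarrow> 'c::comm_monoid_add"
  shows "(\<Sum>x\<leftarrow>xs. \<Sum>y\<leftarrow>ys. f x y) = (\<Sum>y\<leftarrow>ys. \<Sum>x\<leftarrow>xs. f x y)"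
  by (induction xs) (simp_all add: sum_list_addf)

lemma sum_list_swap2:
  fixes f :: "'a \<Rightarrow> 'b \<Rightarrow> 'c \<Rightarrow> 'e \<Rightarrow> 'g::comm_monoid_add"
  shows "(\<Sum>a\<leftarrow>A. \<Sum>b\<leftarrow>B. \<Sum>c\<leftarrow>C. \<Sum>d\<leftarrow>D. f a b c d)
       = (\<Sum>c\<leftarrow>C. \<Sum>d\<leftarrow>D. \<Sum>a\<leftarrow>A. \<Sum>b\<leftarrow>B. f a b c d)"
proof -
  have "(\<Sum>b\<leftarrow>B. \<Sum>c\<leftarrow>C. \<Sum>d\<leftarrow>D. f a b c d) = (\<Sum>c\<leftarrow>C. \<Sum>d\<leftarrow>D. \<Sum>b\<leftarrow>B. f a b c d)" for a
    by (simp add: sum_list_swap[where xs = B])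
  then show ?thesis
    by (simp add: sum_list_swap[where xs = A])
qed

lemma sum_list_mult_sum_list:
  fixes f g :: "_ \<Rightarrow> 'a::comm_semiring_0"
  shows "(\<Sum>x\<leftarrow>xs. f x) * (\<Sum>y\<leftarrow>ys. g y) = (\<Sum>x\<leftarrow>xs. \<Sum>y\<leftarrow>ys. f x * g y)"
  by (simp add: sum_list_const_mult sum_list_mult_const)

lemma sum_list_neq_zeroE:
  assumes "(\<Sum>x\<leftarrow>xs. f x) \<noteq> 0"
  obtains x where "x \<in> set xs" and "f x \<noteq> 0"
proof -
  have "\<exists>x\<in>set xs. f x \<noteq> 0"
    using assms by (induction xs) auto
  with that show thesis
    by blast
qed

lemma sum_list_split_if:
  fixes f :: "'a \<Rightarrow> 'b::comm_monoid_add"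
  shows "(\<Sum>c\<leftarrow>L. f c) = (\<Sum>c\<leftarrow>L. if P c then f c else 0) + (\<Sum>c\<leftarrow>L. if P c then 0 else f c)"
  by (induction L) (simp_all add: algebra_simps)

lemma weight_Nil [simp]: "weight [] = 0"
  by (simp add: weight_def)

lemma weight_Cons [simp]: "weight (t # F) = weight_t t + weight F"
  by (simp add: weight_def)

lemma weight_append [simp]: "weight (F @ G) = weight F + weight G"
  by (simp add: weight_def)

lemma weight_t_Node [simp]: "weight_t (Node d ts) = Suc (weight ts)"
  by (simp add: weight_def)

declare weight_t.simps [simp del]

lemma weight_t_pos: "0 < weight_t t"
  by (cases t) simp

lemma weight_eq_0_iff [simp]: "weight F = 0 \<longleftrightarrow> F = []"
  by (cases F) (simp_all add: weight_t_pos)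

lemma weight_butlast_less: "F \<noteq> [] \<Longrightarrow> weight (butlast F) < weight F"
  by (induction F rule: rev_induct) (simp_all add: weight_t_pos)

lemma weight_last_subforest_less: "F \<noteq> [] \<Longrightarrow> last F = Node d G \<Longrightarrow> weight G < weight F"
  by (induction F rule: rev_induct) auto

lemma forest_induct [case_names Nil Node Cons]:
  assumes "P []" and "\<And>d ts. P ts \<Longrightarrow> P [Node d ts]"
    and "\<And>t G. G \<noteq> [] \<Longrightarrow> P [t] \<Longrightarrow> P G \<Longrightarrow> P (t # G)"
  shows "P F"
proof (induction F rule: measure_induct_rule[of weight])
  case (less F)
  show ?case
  proof (cases F)
    case (Cons t G)
    obtain d ts where t: "t = Node d ts"
      by (cases t)
    show ?thesis
    proof (cases "G = []")
      case True
      with less Cons t assms(2) show ?thesis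
        by simp
    next
      case False
      then have "0 < weight G"
        by (simp add: zero_less_iff_neq_zero)
      then have "P [t]" and "P G"
        using less Cons by (simp_all add: weight_t_pos)
      with False Cons assms(3) show ?thesis
        by simp
    qed
  qed (simp add: assms(1))
qed

lemma snoc_Node_cases:
  obtains "F = []" | F' d G where "F = F' @ [Node d G]"
proof (cases F rule: rev_cases)
  case (snoc F' t)
  with that show thesis
    by (cases t) blast
qed

lemma forest_snoc_induct [case_names Nil snoc]:
  assumes "P []" and "\<And>F d G. P F \<Longrightarrow> P G \<Longrightarrow> P (F @ [Node d G])"
  shows "P F"
proof (induction F rule: measure_induct_rule[of weight])
  case (less F)
  then show ?case
    using assms by (cases F rule: snoc_Node_cases) simp_all
qed

lemma finite_weight_le: "finite {F :: 'd::finite forest. weight F \<le> n}"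
proof (induction n)
  case 0
  then show ?case
    by simp
next
  case (Suc n)
  let ?S = "{F :: 'd forest. weight F \<le> n}"
  have "{F :: 'd forest. weight F \<le> Suc n} \<subseteq> insert [] ((\<lambda>(d, H, R). Node d H # R) ` (UNIV \<times> ?S \<times> ?S))"
  proof
    fix F :: "'d forest"
    assume F: "F \<in> {F. weight F \<le> Suc n}"
    show "F \<in> insert [] ((\<lambda>(d, H, R). Node d H # R) ` (UNIV \<times> ?S \<times> ?S))"
    proof (cases F)
      case (Cons t R)
      obtain d H where "t = Node d H"
        by (cases t)
      with F Cons show ?thesis
        by (auto intro!: image_eqI[where x = "(d, H, R)"])
    qed simp
  qed
  moreover have "finite (insert [] ((\<lambda>(d, H, R). Node d H # R) ` (UNIV \<times> ?S \<times> ?S)))"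
    using Suc by simp
  ultimately show ?case
    by (rule finite_subset)
qed

section \<open>Cuts\<close>

definition cut_prod ::
  "('a list \<times> 'b list) list \<Rightarrow> ('a list \<times> 'b list) list \<Rightarrow> ('a list \<times> 'b list) list" where
  "cut_prod A B = concat (map (\<lambda>(p, r). map (\<lambda>(p', r'). (p @ p', r @ r')) B) A)"

lemma cut_prod_Nil [simp]: "cut_prod [] B = []"
  by (simp add: cut_prod_def)

lemma cut_prod_Cons [simp]:
  "cut_prod ((p, r) # A) B = map (\<lambda>(p', r'). (p @ p', r @ r')) B @ cut_prod A B"
  by (simp add: cut_prod_def)

lemma cut_prod_append: "cut_prod (A @ A') B = cut_prod A B @ cut_prod A' B"
  by (simp add: cut_prod_def)

lemma cut_prod_Nil_Nil_right [simp]: "cut_prod A [([], [])] = A"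
  by (induction A) auto

lemma cut_prod_assoc: "cut_prod (cut_prod A B) C = cut_prod A (cut_prod B C)"
proof (induction A)
  case (Cons a A)
  have "cut_prod (map (\<lambda>(p', r'). (fst a @ p', snd a @ r')) B) C
      = map (\<lambda>(p', r'). (fst a @ p', snd a @ r')) (cut_prod B C)"
    by (induction B) (auto simp: cut_prod_append)
  with Cons show ?case
    by (cases a) (simp add: cut_prod_append)
qed simp

lemma sum_list_cut_prod:
  "(\<Sum>c\<leftarrow>cut_prod A B. h c) = (\<Sum>(p, r)\<leftarrow>A. \<Sum>(p', r')\<leftarrow>B. h (p @ p', r @ r'))"
  by (induction A) (auto simp: case_prod_beta comp_def)

lemma mem_cut_prod:
  "c \<in> set (cut_prod A B) \<longleftrightarrow>
     (\<exists>p r p' r'. (p, r) \<in> set A \<and> (p', r') \<in> set B \<and> c = (p @ p', r @ r'))"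
  by (auto simp: cut_prod_def; fastforce)

lemma filter_cut_prod:
  assumes "\<And>c c'. P (fst c @ fst c', snd c @ snd c') \<longleftrightarrow> P c \<and> P c'"
  shows "filter P (cut_prod A B) = cut_prod (filter P A) (filter P B)"
proof (induction A)
  case (Cons a A)
  have "filter P (map (\<lambda>(p', r'). (fst a @ p', snd a @ r')) B)
      = (if P a then map (\<lambda>(p', r'). (fst a @ p', snd a @ r')) (filter P B) else [])"
    using assms[of a] by (induction B) auto
  with Cons show ?case
    by (cases a) auto
qed simp

lemma cuts_forest_Nil [simp]: "cuts_forest [] = [([], [])]"
  by (simp add: cuts_forest_def)

lemma cuts_forest_Cons: "cuts_forest (t # G) = cut_prod (cuts t) (cuts_forest G)"
  by (simp add: cuts_forest_def cut_prod_def)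

lemma cuts_forest_single [simp]: "cuts_forest [t] = cuts t"
  by (simp add: cuts_forest_Cons)

lemma cuts_forest_append: "cuts_forest (F @ G) = cut_prod (cuts_forest F) (cuts_forest G)"
  by (induction F) (simp_all add: cuts_forest_Cons cut_prod_assoc)

lemma cuts_Node:
  "cuts (Node d ts) = ([Node d ts], []) # map (\<lambda>(p, r). (p, [Node d r])) (cuts_forest ts)"
  by (simp add: cuts_forest_def)

declare cuts.simps [simp del]

lemma weight_cuts_forest: "(p, r) \<in> set (cuts_forest F) \<Longrightarrow> weight p + weight r = weight F"
proof (induction F arbitrary: p r rule: forest_induct)
  case (Node d ts)
  then show ?case
    by (auto simp: cuts_Node)
next
  case (Cons t G)
  then obtain p1 r1 p2 r2 where "(p1, r1) \<in> set (cuts t)" "(p2, r2) \<in> set (cuts_forest G)"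
    and "p = p1 @ p2" "r = r1 @ r2"
    by (auto simp: cuts_forest_Cons mem_cut_prod)
  with Cons.IH show ?case
    by fastforce
qed simp

lemma weight_fst_cut_less:
  assumes "c \<in> set (cuts_forest F)" and "snd c \<noteq> []"
  shows "weight (fst c) < weight F"
proof -
  have "weight (snd c) \<noteq> 0"
    using assms(2) by simp
  moreover have "weight (fst c) + weight (snd c) = weight F"
    using assms(1) weight_cuts_forest[of "fst c" "snd c"] by simp
  ultimately show ?thesis
    by linarith
qed

lemma weight_snd_cut_less:
  assumes "c \<in> set (cuts_forest F)" and "fst c \<noteq> []"
  shows "weight (snd c) < weight F"
proof -
  have "weight (fst c) \<noteq> 0"
    using assms(2) by simp
  moreover have "weight (fst c) + weight (snd c) = weight F"
    using assms(1) weight_cuts_forest[of "fst c" "snd c"] by simp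
  ultimately show ?thesis
    by linarith
qed

lemma filter_cuts_forest_fst_Nil: "filter (\<lambda>c. fst c = []) (cuts_forest F) = [([], F)]"
proof (induction F rule: forest_induct)
  case (Node d ts)
  then show ?case
    by (simp add: cuts_Node filter_map comp_def case_prod_beta)
next
  case (Cons t G)
  then show ?case
    by (simp add: cuts_forest_Cons filter_cut_prod)
qed simp

lemma filter_cuts_forest_snd_Nil: "filter (\<lambda>c. snd c = []) (cuts_forest F) = [(F, [])]"
proof (induction F rule: forest_induct)
  case (Node d ts)
  then show ?case
    by (simp add: cuts_Node filter_map comp_def case_prod_beta)
next
  case (Cons t G)
  then show ?case
    by (simp add: cuts_forest_Cons filter_cut_prod)
qed simp

lemma sum_list_cuts_forest_fst_Nil:
  assumes "\<And>p r. p \<noteq> [] \<Longrightarrow> h p r = 0"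
  shows "(\<Sum>(p, r)\<leftarrow>cuts_forest F. h p r) = h [] F"
proof -
  have "(\<Sum>(p, r)\<leftarrow>cuts_forest F. h p r) = (\<Sum>(p, r)\<leftarrow>filter (\<lambda>c. fst c = []) (cuts_forest F). h p r)"
    using assms by (intro sum_list_map_filter[symmetric]) auto
  then show ?thesis
    by (simp add: filter_cuts_forest_fst_Nil)
qed

lemma sum_list_cuts_forest_snd_Nil:
  assumes "\<And>p r. r \<noteq> [] \<Longrightarrow> h p r = 0"
  shows "(\<Sum>(p, r)\<leftarrow>cuts_forest F. h p r) = h F []"
proof -
  have "(\<Sum>(p, r)\<leftarrow>cuts_forest F. h p r) = (\<Sum>(p, r)\<leftarrow>filter (\<lambda>c. snd c = []) (cuts_forest F). h p r)"
    using assms by (intro sum_list_map_filter[symmetric]) auto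
  then show ?thesis
    by (simp add: filter_cuts_forest_snd_Nil)
qed

lemma cuts_forest_coassoc:
  fixes f :: "'d forest \<Rightarrow> 'd forest \<Rightarrow> 'd forest \<Rightarrow> 'c::comm_monoid_add"
  shows "(\<Sum>(p, r)\<leftarrow>cuts_forest F. \<Sum>(a, b)\<leftarrow>cuts_forest p. f a b r)
       = (\<Sum>(p, r)\<leftarrow>cuts_forest F. \<Sum>(a, b)\<leftarrow>cuts_forest r. f p a b)"
proof (induction F arbitrary: f rule: forest_induct)
  case (Node d ts)
  then show ?case
    using Node[of "\<lambda>a b r. f a b [Node d r]"]
    by (simp add: cuts_Node case_prod_beta sum_list_addf comp_def add.assoc)
next
  case (Cons t G)
  have "(\<Sum>(p, r)\<leftarrow>cuts_forest (t # G). \<Sum>(a, b)\<leftarrow>cuts_forest p. f a b r)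
    = (\<Sum>(p1, r1)\<leftarrow>cuts t. \<Sum>(p2, r2)\<leftarrow>cuts_forest G.
         \<Sum>(a1, b1)\<leftarrow>cuts_forest p1. \<Sum>(a2, b2)\<leftarrow>cuts_forest p2. f (a1 @ a2) (b1 @ b2) (r1 @ r2))"
    by (simp add: cuts_forest_Cons sum_list_cut_prod cuts_forest_append case_prod_beta)
  also have "\<dots> = (\<Sum>(p1, r1)\<leftarrow>cuts t. \<Sum>(a1, b1)\<leftarrow>cuts_forest p1.
         \<Sum>(p2, r2)\<leftarrow>cuts_forest G. \<Sum>(a2, b2)\<leftarrow>cuts_forest p2. f (a1 @ a2) (b1 @ b2) (r1 @ r2))"
    by (simp add: split_def sum_list_swap[where xs = "cuts_forest G"])
  also have "\<dots> = (\<Sum>(p1, r1)\<leftarrow>cuts t. \<Sum>(a1, b1)\<leftarrow>cuts_forest p1.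
         \<Sum>(p2, r2)\<leftarrow>cuts_forest G. \<Sum>(a2, b2)\<leftarrow>cuts_forest r2. f (a1 @ p2) (b1 @ a2) (r1 @ b2))"
    using Cons.IH(2) by simp
  also have "\<dots> = (\<Sum>(p1, r1)\<leftarrow>cuts t. \<Sum>(a1, b1)\<leftarrow>cuts_forest r1.
         \<Sum>(p2, r2)\<leftarrow>cuts_forest G. \<Sum>(a2, b2)\<leftarrow>cuts_forest r2. f (p1 @ p2) (a1 @ a2) (b1 @ b2))"
    using Cons.IH(1)[of "\<lambda>a1 b1 r1. \<Sum>(p2, r2)\<leftarrow>cuts_forest G. \<Sum>(a2, b2)\<leftarrow>cuts_forest r2.
      f (a1 @ p2) (b1 @ a2) (r1 @ b2)"] by simp
  also have "\<dots> = (\<Sum>(p, r)\<leftarrow>cuts_forest (t # G). \<Sum>(a, b)\<leftarrow>cuts_forest r. f p a b)"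
    by (simp add: cuts_forest_Cons sum_list_cut_prod cuts_forest_append split_def
        sum_list_swap[where ys = "cuts_forest G"])
  finally show ?case .
qed simp

lemma lookup_smult [simp]: "Poly_Mapping.lookup (smult c x) k = c * Poly_Mapping.lookup x k"
  by (simp add: smult_def Poly_Mapping.map.rep_eq when_def)

lemma smult_zero [simp]: "smult c 0 = 0"
  by (rule poly_mapping_eqI) simp

lemma smult_zero_left [simp]: "smult 0 x = 0"
  by (rule poly_mapping_eqI) simp

lemma smult_one [simp]: "smult 1 x = x"
  by (rule poly_mapping_eqI) simp

lemma smult_smult [simp]: "smult a (smult b x) = smult (a * b) x"
  by (rule poly_mapping_eqI) simp

lemma smult_add: "smult c (x + y) = smult c x + smult c y"
  by (rule poly_mapping_eqI) (simp add: lookup_add algebra_simps)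

lemma smult_add_left: "smult (a + b) x = smult a x + smult b x"
  by (rule poly_mapping_eqI) (simp add: lookup_add algebra_simps)

lemma smult_single [simp]: "smult c (Poly_Mapping.single k v) = Poly_Mapping.single k (c * v)"
  by (rule poly_mapping_eqI) (simp add: lookup_single when_def)

lemma smult_sum: "smult c (sum f A) = (\<Sum>a\<in>A. smult c (f a))"
  by (rule poly_mapping_eqI) (simp add: lookup_sum sum_distrib_left)

lemma keys_smult: "Poly_Mapping.keys (smult c x) \<subseteq> Poly_Mapping.keys x"
  by (auto simp: in_keys_iff)

lemma lookup_basis: "Poly_Mapping.lookup (basis F) G = (if F = G then 1 else 0)"
  by (simp add: basis_def lookup_single when_def)

lemma single_eq_smult_basis: "Poly_Mapping.single k c = smult c (basis k)"
  by (simp add: basis_def)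

definition lin_ext :: "('k \<Rightarrow> ('m \<Rightarrow>\<^sub>0 rat)) \<Rightarrow> ('k \<Rightarrow>\<^sub>0 rat) \<Rightarrow> ('m \<Rightarrow>\<^sub>0 rat)" where
  "lin_ext g x = (\<Sum>k\<in>Poly_Mapping.keys x. smult (Poly_Mapping.lookup x k) (g k))"

definition lin_form :: "('k \<Rightarrow> rat) \<Rightarrow> ('k \<Rightarrow>\<^sub>0 rat) \<Rightarrow> rat" where
  "lin_form g x = (\<Sum>k\<in>Poly_Mapping.keys x. Poly_Mapping.lookup x k * g k)"

definition linear_form :: "(('k \<Rightarrow>\<^sub>0 rat) \<Rightarrow> rat) \<Rightarrow> bool" where
  "linear_form L \<longleftrightarrow> (\<forall>x y. L (x + y) = L x + L y) \<and> (\<forall>c x. L (smult c x) = c * L x)"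

lemma lin_ext_superset:
  assumes "finite S" and "Poly_Mapping.keys x \<subseteq> S"
  shows "lin_ext g x = (\<Sum>k\<in>S. smult (Poly_Mapping.lookup x k) (g k))"
  unfolding lin_ext_def by (rule sum.mono_neutral_left) (use assms in \<open>auto simp: in_keys_iff\<close>)

lemma lin_form_superset:
  assumes "finite S" and "Poly_Mapping.keys x \<subseteq> S"
  shows "lin_form g x = (\<Sum>k\<in>S. Poly_Mapping.lookup x k * g k)"
  unfolding lin_form_def by (rule sum.mono_neutral_left) (use assms in \<open>auto simp: in_keys_iff\<close>)

lemma lin_ext_add: "lin_ext g (x + y) = lin_ext g x + lin_ext g y"
proof -
  let ?S = "Poly_Mapping.keys x \<union> Poly_Mapping.keys y"
  have "Poly_Mapping.keys (x + y) \<subseteq> ?S"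
    by (rule keys_add)
  then show ?thesis
    by (simp add: lin_ext_superset[of ?S] lookup_add smult_add_left sum.distrib)
qed

lemma lin_form_add: "lin_form g (x + y) = lin_form g x + lin_form g y"
proof -
  let ?S = "Poly_Mapping.keys x \<union> Poly_Mapping.keys y"
  have "Poly_Mapping.keys (x + y) \<subseteq> ?S"
    by (rule keys_add)
  then show ?thesis
    by (simp add: lin_form_superset[of ?S] lookup_add distrib_right sum.distrib)
qed

lemma lin_ext_smult: "lin_ext g (smult c x) = smult c (lin_ext g x)"
proof -
  have "lin_ext g (smult c x) = (\<Sum>k\<in>Poly_Mapping.keys x. smult (c * Poly_Mapping.lookup x k) (g k))"
    using lin_ext_superset[OF finite_keys keys_smult] by simp
  then show ?thesis
    by (simp add: lin_ext_def smult_sum)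
qed

lemma lin_form_smult: "lin_form g (smult c x) = c * lin_form g x"
proof -
  have "lin_form g (smult c x) = (\<Sum>k\<in>Poly_Mapping.keys x. c * Poly_Mapping.lookup x k * g k)"
    using lin_form_superset[OF finite_keys keys_smult] by simp
  then show ?thesis
    by (simp add: lin_form_def sum_distrib_left mult.assoc)
qed

lemma linear_map_lin_ext: "linear_map (lin_ext g)"
  by (simp add: linear_map_def lin_ext_add lin_ext_smult)

lemma linear_form_lin_form: "linear_form (lin_form g)"
  by (simp add: linear_form_def lin_form_add lin_form_smult)

lemma lin_ext_zero [simp]: "lin_ext g 0 = 0"
  by (simp add: lin_ext_def)

lemma lin_form_zero [simp]: "lin_form g 0 = 0"
  by (simp add: lin_form_def)

lemma lin_ext_single [simp]: "lin_ext g (Poly_Mapping.single k c) = smult c (g k)"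
  by (cases "c = 0") (simp_all add: lin_ext_def)

lemma lin_form_single [simp]: "lin_form g (Poly_Mapping.single k c) = c * g k"
  by (cases "c = 0") (simp_all add: lin_form_def)

lemma lin_ext_basis [simp]: "lin_ext g (basis k) = g k"
  by (simp add: basis_def)

lemma lin_form_basis [simp]: "lin_form g (basis k) = g k"
  by (simp add: basis_def)

lemma lin_form_sum: "lin_form g (sum f A) = (\<Sum>a\<in>A. lin_form g (f a))"
  by (induction A rule: infinite_finite_induct) (simp_all add: lin_form_add)

lemma lin_ext_sum_list: "lin_ext g (\<Sum>a\<leftarrow>L. f a) = (\<Sum>a\<leftarrow>L. lin_ext g (f a))"
  by (induction L) (simp_all add: lin_ext_add)

lemma lin_form_sum_list: "lin_form g (\<Sum>a\<leftarrow>L. f a) = (\<Sum>a\<leftarrow>L. lin_form g (f a))"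
  by (induction L) (simp_all add: lin_form_add)

lemma lin_ext_diff: "lin_ext g (x - y) = lin_ext g x - lin_ext g y"
  using lin_ext_add[of g "x - y" y] by (simp add: algebra_simps)

lemma lin_form_diff: "lin_form g (x - y) = lin_form g x - lin_form g y"
  using lin_form_add[of g "x - y" y] by (simp add: algebra_simps)

lemma lin_form_cong:
  "(\<And>k. k \<in> Poly_Mapping.keys x \<Longrightarrow> g k = g' k) \<Longrightarrow> lin_form g x = lin_form g' x"
  by (simp add: lin_form_def)

lemma lin_ext_fun_add: "lin_ext (\<lambda>k. g k + h k) x = lin_ext g x + lin_ext h x"
  by (simp add: lin_ext_def smult_add sum.distrib)

lemma lin_form_fun_add: "lin_form (\<lambda>k. g k + h k) x = lin_form g x + lin_form h x"
  by (simp add: lin_form_def distrib_left sum.distrib)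

lemma lin_form_fun_mult: "lin_form (\<lambda>k. c * g k) x = c * lin_form g x"
  by (simp add: lin_form_def sum_distrib_left algebra_simps)

lemma lin_ext_fun_zero [simp]: "lin_ext (\<lambda>k. 0) x = 0"
  by (simp add: lin_ext_def)

lemma lin_form_fun_zero [simp]: "lin_form (\<lambda>k. 0) x = 0"
  by (simp add: lin_form_def)

lemma lin_ext_basis_id [simp]: "lin_ext basis x = x"
proof (rule poly_mapping_eqI)
  fix k
  have "Poly_Mapping.lookup (lin_ext basis x) k
      = (\<Sum>j\<in>Poly_Mapping.keys x. Poly_Mapping.lookup x j * (if j = k then 1 else 0))"
    by (simp add: lin_ext_def lookup_sum lookup_basis)
  also have "\<dots> = Poly_Mapping.lookup x k"
    by (simp add: if_distrib sum.delta in_keys_iff cong: if_cong)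
  finally show "Poly_Mapping.lookup (lin_ext basis x) k = Poly_Mapping.lookup x k" .
qed

lemma lin_form_indicator: "lin_form (\<lambda>j. if j = k then 1 else 0) x = Poly_Mapping.lookup x k"
  by (simp add: lin_form_def if_distrib sum.delta in_keys_iff cong: if_cong)

lemma linear_map_lin_ext_comp:
  assumes "linear_map T"
  shows "T (lin_ext h x) = lin_ext (\<lambda>k. T (h k)) x"
proof -
  have add: "T (a + b) = T a + T b" and smult: "T (smult c a) = smult c (T a)" for a b c
    using assms by (simp_all add: linear_map_def)
  have "T 0 = 0"
    using smult[of 0 0] by simp
  then have sum: "T (sum f A) = (\<Sum>a\<in>A. T (f a))" for f and A :: "'k set"
    by (induction A rule: infinite_finite_induct) (simp_all add: add)
  show ?thesis
    unfolding lin_ext_def sum smult ..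
qed

lemma linear_form_lin_ext_comp:
  assumes "linear_form L"
  shows "L (lin_ext h x) = lin_form (\<lambda>k. L (h k)) x"
proof -
  have add: "L (a + b) = L a + L b" and smult: "L (smult c a) = c * L a" for a b c
    using assms by (simp_all add: linear_form_def)
  have "L 0 = 0"
    using smult[of 0 0] by simp
  then have sum: "L (sum f A) = (\<Sum>a\<in>A. L (f a))" for f and A :: "'k set"
    by (induction A rule: infinite_finite_induct) (simp_all add: add)
  show ?thesis
    unfolding lin_ext_def lin_form_def sum smult ..
qed

lemma linear_map_expand: "linear_map T \<Longrightarrow> T x = lin_ext (\<lambda>k. T (basis k)) x"
  using linear_map_lin_ext_comp[of T basis x] by simp

lemma linear_form_expand: "linear_form L \<Longrightarrow> L x = lin_form (\<lambda>k. L (basis k)) x"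
  using linear_form_lin_ext_comp[of L basis x] by simp

lemma lin_ext_lin_ext: "lin_ext g (lin_ext h x) = lin_ext (\<lambda>k. lin_ext g (h k)) x"
  by (rule linear_map_lin_ext_comp[OF linear_map_lin_ext])

lemma lin_form_lin_ext: "lin_form g (lin_ext h x) = lin_form (\<lambda>k. lin_form g (h k)) x"
  by (rule linear_form_lin_ext_comp[OF linear_form_lin_form])

lemma lin_form_swap: "lin_form (\<lambda>a. lin_form (h a) y) x = lin_form (\<lambda>b. lin_form (\<lambda>a. h a b) x) y"
  unfolding lin_form_def sum_distrib_left
  by (subst sum.swap) (simp add: sum_distrib_left mult.left_commute)

lemma lin_form_mult_right: "lin_form g x * c = lin_form (\<lambda>k. g k * c) x"
  by (simp add: lin_form_def sum_distrib_right mult.assoc)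

lemma sum_list_lin_form:
  "(\<Sum>l\<leftarrow>L. lin_form (h l) x) = lin_form (\<lambda>k. \<Sum>l\<leftarrow>L. h l k) x"
  by (induction L) (simp_all add: lin_form_fun_add)

definition Delta_forest :: "'d forest \<Rightarrow> 'd HH" where
  "Delta_forest F = (\<Sum>c\<leftarrow>cuts_forest F. Poly_Mapping.single c 1)"

definition gamma_forest :: "'d \<Rightarrow> 'd forest \<Rightarrow> 'd H" where
  "gamma_forest d F = (if F \<noteq> [] \<and> last F = Node d [] then basis (butlast F) else 0)"

lemma mult_lin_ext: "mult x y = lin_ext (\<lambda>F. lin_ext (\<lambda>G. basis (F @ G)) y) x"
  by (simp add: mult_def lin_ext_def smult_sum single_eq_smult_basis)

lemma tensor_lin_ext: "tensor x y = lin_ext (\<lambda>F. lin_ext (\<lambda>G. Poly_Mapping.single (F, G) 1) y) x"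
  by (simp add: tensor_def lin_ext_def smult_sum)

lemma Delta_lin_ext: "Delta x = lin_ext Delta_forest x"
  by (simp add: Delta_def lin_ext_def Delta_forest_def)

lemma Bplus_lin_ext: "Bplus d x = lin_ext (\<lambda>F. basis [Node d F]) x"
  by (simp add: Bplus_def lin_ext_def single_eq_smult_basis)

lemma gamma_lin_ext: "gamma d x = lin_ext (gamma_forest d) x"
  unfolding gamma_def lin_ext_def gamma_forest_def
  by (rule sum.cong) (simp_all add: single_eq_smult_basis)

lemma conv_lin_ext:
  "conv f g x = lin_ext (\<lambda>c. mult (f (basis (fst c))) (g (basis (snd c)))) (Delta x)"
  by (simp add: conv_def lin_ext_def)

lemma pair2_lin_form:
  "pair2 B x1 x2 T = lin_form (\<lambda>c. B x1 (basis (fst c)) * B x2 (basis (snd c))) T"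
  by (simp add: pair2_def lin_form_def mult.assoc)

lemma pair2_add: "pair2 B x1 x2 (T + T') = pair2 B x1 x2 T + pair2 B x1 x2 T'"
  by (simp add: pair2_lin_form lin_form_add)

lemma pair2_diff: "pair2 B x1 x2 (T - T') = pair2 B x1 x2 T - pair2 B x1 x2 T'"
  by (simp add: pair2_lin_form lin_form_diff)

lemma pair2_sum: "pair2 B x1 x2 (sum f A) = (\<Sum>a\<in>A. pair2 B x1 x2 (f a))"
  by (simp add: pair2_lin_form lin_form_sum)

lemma lincomb_lin_ext: "lincomb c e = lin_ext e c"
  by (simp add: lincomb_def lin_ext_def)

lemma eps_lin_form: "eps x = lin_form (\<lambda>F. if F = [] then 1 else 0) x"
  by (simp add: eps_def lin_form_indicator)

lemma mult_basis [simp]: "mult (basis F) (basis G) = basis (F @ G)"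
  by (simp add: mult_lin_ext)

lemma mult_basis_left: "mult (basis F) y = lin_ext (\<lambda>G. basis (F @ G)) y"
  by (simp add: mult_lin_ext)

lemma mult_add_left: "mult (x + y) z = mult x z + mult y z"
  by (simp add: mult_lin_ext lin_ext_add)

lemma mult_add_right: "mult z (x + y) = mult z x + mult z y"
  by (simp add: mult_lin_ext lin_ext_add lin_ext_fun_add)

lemma mult_smult_left: "mult (smult c x) z = smult c (mult x z)"
  by (simp add: mult_lin_ext lin_ext_smult)

lemma mult_zero_left [simp]: "mult 0 x = 0"
  by (simp add: mult_lin_ext)

lemma mult_zero_right [simp]: "mult x 0 = 0"
  by (simp add: mult_lin_ext)

lemma mult_one_left [simp]: "mult one x = x"
  by (simp add: one_def mult_lin_ext)

lemma mult_one_right [simp]: "mult x one = x"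
  by (simp add: one_def mult_lin_ext)

lemma mult_lin_ext_left: "mult (lin_ext h x) y = lin_ext (\<lambda>k. mult (h k) y) x"
  by (rule linear_map_lin_ext_comp) (simp add: linear_map_def mult_add_left mult_smult_left)

lemma mult_assoc: "mult (mult x y) z = mult x (mult y z)"
proof -
  have "mult (mult x y) z = lin_ext (\<lambda>F. lin_ext (\<lambda>G. lin_ext (\<lambda>K. basis (F @ G @ K)) z) y) x"
    by (simp add: mult_lin_ext[of x y] mult_lin_ext_left mult_basis_left)
  also have "\<dots> = lin_ext (\<lambda>F. mult (basis F) (mult y z)) x"
    by (simp add: mult_basis_left mult_lin_ext[of y z] lin_ext_lin_ext)
  also have "\<dots> = mult x (mult y z)"
    using mult_lin_ext_left[of basis x "mult y z"] by simp
  finally show ?thesis .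
qed

lemma mult_sum_list_left: "mult (\<Sum>l\<leftarrow>L. f l) y = (\<Sum>l\<leftarrow>L. mult (f l) y)"
  by (induction L) (simp_all add: mult_add_left)

lemma mult_sum_list_right: "mult y (\<Sum>l\<leftarrow>L. f l) = (\<Sum>l\<leftarrow>L. mult y (f l))"
  by (induction L) (simp_all add: mult_add_right)

lemma Delta_basis: "Delta (basis F) = Delta_forest F"
  by (simp add: Delta_lin_ext)

lemma bilinear_form_expand:
  assumes "bilinear_form B"
  shows "B x y = lin_form (\<lambda>F. lin_form (\<lambda>G. B (basis F) (basis G)) y) x"
proof -
  have left: "linear_form (\<lambda>x. B x y)" and right: "linear_form (B x)" for x y
    using assms by (simp_all add: bilinear_form_def linear_form_def)
  have "B x y = lin_form (\<lambda>F. B (basis F) y) x"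
    using linear_form_expand[OF left] .
  also have "\<dots> = lin_form (\<lambda>F. lin_form (\<lambda>G. B (basis F) (basis G)) y) x"
    using linear_form_expand[OF right] by (rule lin_form_cong)
  finally show ?thesis .
qed

lemma bilinear_form_zero_right:
  assumes "bilinear_form B"
  shows "B x 0 = 0"
proof -
  have "B x (smult 0 0) = 0 * B x 0"
    using assms unfolding bilinear_form_def by blast
  then show ?thesis
    by simp
qed

section \<open>The pairing of basis forests\<close>

function forest_pairing :: "'d forest \<Rightarrow> 'd forest \<Rightarrow> rat" where
  "forest_pairing [] G = (if G = [] then 1 else 0)"
| "forest_pairing [Node d F] G =
     (if G \<noteq> [] \<and> last G = Node d [] then forest_pairing F (butlast G) else 0)"
| "forest_pairing (t # t' # ts) G =
     (\<Sum>(p, r)\<leftarrow>cuts_forest G. forest_pairing [t] p * forest_pairing (t' # ts) r)"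
  by pat_completeness auto
termination
  by (relation "measure (\<lambda>(F, G). weight F)") (simp_all add: weight_t_pos)

declare forest_pairing.simps(1,3) [simp del]

lemma forest_pairing_Nil_Nil [simp]: "forest_pairing [] [] = 1"
  by (simp add: forest_pairing.simps(1))

lemma forest_pairing_Nil_Cons [simp]: "forest_pairing [] (t # G) = 0"
  by (simp add: forest_pairing.simps(1))

lemma forest_pairing_Cons:
  "G \<noteq> [] \<Longrightarrow>
   forest_pairing (t # G) K = (\<Sum>(p, r)\<leftarrow>cuts_forest K. forest_pairing [t] p * forest_pairing G r)"
  by (cases G) (simp_all add: forest_pairing.simps(3))

lemma sum_list_forest_pairing_Nil_left:
  "(\<Sum>(p, r)\<leftarrow>cuts_forest G. forest_pairing [] p * h r) = h G"
  by (subst sum_list_cuts_forest_fst_Nil) (auto simp: forest_pairing.simps(1))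

lemma sum_list_forest_pairing_Nil_right:
  "(\<Sum>(p, r)\<leftarrow>cuts_forest G. h p * forest_pairing [] r) = h G"
  by (subst sum_list_cuts_forest_snd_Nil) (auto simp: forest_pairing.simps(1))

lemma forest_pairing_eq_weight: "forest_pairing F G \<noteq> 0 \<Longrightarrow> weight F = weight G"
proof (induction F G rule: forest_pairing.induct)
  case (2 d F G)
  then have "G \<noteq> []" and "last G = Node d []" and "weight F = weight (butlast G)"
    by (auto split: if_splits)
  moreover from this have "weight G = weight (butlast G) + weight [last G]"
    by (metis append_butlast_last_id weight_append)
  ultimately show ?case
    by simp
next
  case (3 t t' ts G)
  then obtain p r where "(p, r) \<in> set (cuts_forest G)"
    and "forest_pairing [t] p \<noteq> 0" and "forest_pairing (t' # ts) r \<noteq> 0"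
    by (auto simp: forest_pairing.simps(3) elim!: sum_list_neq_zeroE)
  with 3 show ?case
    using weight_cuts_forest by fastforce
qed (simp add: forest_pairing.simps(1) split: if_splits)

lemma forest_pairing_append:
  "forest_pairing (F @ F') G = (\<Sum>(p, r)\<leftarrow>cuts_forest G. forest_pairing F p * forest_pairing F' r)"
proof (induction F arbitrary: G)
  case Nil
  then show ?case
    by (simp add: sum_list_forest_pairing_Nil_left)
next
  case (Cons t F)
  show ?case
  proof (cases "F = []")
    case True
    then show ?thesis
      by (cases "F' = []") (simp_all add: sum_list_forest_pairing_Nil_right forest_pairing_Cons)
  next
    case False
    have "forest_pairing (t # F @ F') G
        = (\<Sum>(p, r)\<leftarrow>cuts_forest G. \<Sum>(a, b)\<leftarrow>cuts_forest r.
             forest_pairing [t] p * forest_pairing F a * forest_pairing F' b)"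
      using False by (simp add: forest_pairing_Cons Cons.IH split_def sum_list_const_mult mult.assoc)
    also have "\<dots> = (\<Sum>(p, r)\<leftarrow>cuts_forest G. \<Sum>(a, b)\<leftarrow>cuts_forest p.
             forest_pairing [t] a * forest_pairing F b * forest_pairing F' r)"
      by (rule cuts_forest_coassoc[symmetric])
    also have "\<dots> = (\<Sum>(p, r)\<leftarrow>cuts_forest G. forest_pairing (t # F) p * forest_pairing F' r)"
      using False by (simp add: forest_pairing_Cons split_def sum_list_mult_const)
    finally show ?thesis
      by simp
  qed
qed

lemma forest_pairing_Nil_right: "forest_pairing F [] = (if F = [] then 1 else 0)"
  by (induction F rule: forest_induct) (simp_all add: forest_pairing_Cons)

lemma forest_pairing_append_right:
  "forest_pairing G (F @ F') = (\<Sum>(p, r)\<leftarrow>cuts_forest G. forest_pairing p F * forest_pairing r F')"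
proof (induction G arbitrary: F F' rule: forest_induct)
  case Nil
  then show ?case
    by (simp add: forest_pairing.simps(1))
next
  case (Node d H)
  then show ?case
    by (cases "F' = []")
      (simp_all add: cuts_Node split_def comp_def butlast_append forest_pairing.simps(1))
next
  case (Cons t G)
  have "forest_pairing (t # G) (F @ F')
      = (\<Sum>(p1, r1)\<leftarrow>cuts_forest F. \<Sum>(p2, r2)\<leftarrow>cuts_forest F'.
           \<Sum>(a, b)\<leftarrow>cuts t. \<Sum>(c, e)\<leftarrow>cuts_forest G.
             forest_pairing a p1 * forest_pairing b p2 * (forest_pairing c r1 * forest_pairing e r2))"
    using Cons by (simp add: forest_pairing_Cons cuts_forest_append sum_list_cut_prod split_def
        sum_list_mult_sum_list)
  also have "\<dots> = (\<Sum>(a, b)\<leftarrow>cuts t. \<Sum>(c, e)\<leftarrow>cuts_forest G.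
           \<Sum>(p1, r1)\<leftarrow>cuts_forest F. \<Sum>(p2, r2)\<leftarrow>cuts_forest F'.
             forest_pairing a p1 * forest_pairing b p2 * (forest_pairing c r1 * forest_pairing e r2))"
    unfolding split_def by (rule sum_list_swap2)
  also have "\<dots> = (\<Sum>(a, b)\<leftarrow>cuts t. \<Sum>(c, e)\<leftarrow>cuts_forest G.
           forest_pairing (a @ c) F * forest_pairing (b @ e) F')"
  proof -
    have "forest_pairing (a @ c) F * forest_pairing (b @ e) F'
        = (\<Sum>(p1, r1)\<leftarrow>cuts_forest F. \<Sum>(p2, r2)\<leftarrow>cuts_forest F'.
             forest_pairing a p1 * forest_pairing b p2 * (forest_pairing c r1 * forest_pairing e r2))"
      for a b c e
      by (simp add: forest_pairing_append sum_list_mult_sum_list split_def mult_ac)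
    then show ?thesis
      by simp
  qed
  also have "\<dots> = (\<Sum>(p, r)\<leftarrow>cuts_forest (t # G). forest_pairing p F * forest_pairing r F')"
    by (simp add: cuts_forest_Cons sum_list_cut_prod split_def)
  finally show ?case .
qed

lemma forest_pairing_graft_right:
  "forest_pairing G [Node d F] =
     (if G \<noteq> [] \<and> last G = Node d [] then forest_pairing (butlast G) F else 0)"
proof (induction G arbitrary: F rule: forest_induct)
  case Nil
  then show ?case
    by (simp add: forest_pairing.simps(1))
next
  case (Node e H)
  then show ?case
    by (auto simp: forest_pairing_Nil_right forest_pairing.simps(1))
next
  case (Cons t G)
  have "forest_pairing (t # G) [Node d F]
      = (\<Sum>(p, r)\<leftarrow>cuts_forest F. forest_pairing [t] p * forest_pairing G [Node d r])"
    using Cons.hyps by (simp add: forest_pairing_Cons cuts_Node split_def comp_def forest_pairing_Nil_right)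
  also have "\<dots> = (if last G = Node d []
      then (\<Sum>(p, r)\<leftarrow>cuts_forest F. forest_pairing [t] p * forest_pairing (butlast G) r) else 0)"
    using Cons by (simp add: split_def)
  also have "\<dots> = (if last (t # G) = Node d [] then forest_pairing (butlast (t # G)) F else 0)"
    using Cons.hyps
    by (cases "butlast G = []") (simp_all add: sum_list_forest_pairing_Nil_right forest_pairing_Cons)
  finally show ?case
    by simp
qed

lemma forest_pairing_sym: "forest_pairing F G = forest_pairing G F"
proof (induction F arbitrary: G rule: forest_induct)
  case Nil
  then show ?case
    by (simp add: forest_pairing_Nil_right forest_pairing.simps(1))
next
  case (Node d H)
  then show ?case
    by (simp add: forest_pairing_graft_right)
next
  case (Cons t F)
  then have "forest_pairing (t # F) G = (\<Sum>(p, r)\<leftarrow>cuts_forest G. forest_pairing p [t] * forest_pairing r F)"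
    by (simp add: forest_pairing_Cons split_def)
  also have "\<dots> = forest_pairing G ([t] @ F)"
    by (simp only: forest_pairing_append_right)
  finally show ?case
    by simp
qed

definition pairing :: "'d H \<Rightarrow> 'd H \<Rightarrow> rat" where
  "pairing x y = lin_form (\<lambda>F. lin_form (forest_pairing F) y) x"

lemma bilinear_form_pairing: "bilinear_form pairing"
  by (simp add: bilinear_form_def pairing_def lin_form_add lin_form_smult lin_form_fun_add lin_form_fun_mult)

lemma linear_form_pairing_left: "linear_form (\<lambda>x. pairing x y)"
  using bilinear_form_pairing unfolding bilinear_form_def linear_form_def by blast

lemma linear_form_pairing_right: "linear_form (pairing x)"
  using bilinear_form_pairing unfolding bilinear_form_def linear_form_def by blast

lemma pairing_basis [simp]: "pairing (basis F) (basis G) = forest_pairing F G"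
  by (simp add: pairing_def)

lemma pairing_basis_left: "pairing (basis F) y = lin_form (forest_pairing F) y"
  by (simp add: pairing_def)

lemma pairing_basis_right: "pairing x (basis G) = lin_form (\<lambda>F. forest_pairing F G) x"
  by (simp add: pairing_def)

lemma pairing_lin_ext_left: "pairing (lin_ext h x) y = lin_form (\<lambda>k. pairing (h k) y) x"
  by (rule linear_form_lin_ext_comp[OF linear_form_pairing_left])

lemma pairing_lin_ext_right: "pairing y (lin_ext h x) = lin_form (\<lambda>k. pairing y (h k)) x"
  by (rule linear_form_lin_ext_comp[OF linear_form_pairing_right])

lemma pairing_zero_left [simp]: "pairing 0 y = 0"
  by (simp add: pairing_def)

lemma pairing_diff_left: "pairing (a - b) y = pairing a y - pairing b y"
  by (simp add: pairing_def lin_form_diff)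

lemma pairing_smult_left: "pairing (smult c x) y = c * pairing x y"
  by (simp add: pairing_def lin_form_smult)

lemma pairing_sum_left: "pairing (sum f A) y = (\<Sum>a\<in>A. pairing (f a) y)"
  by (simp add: pairing_def lin_form_sum)

lemma pairing_sum_list_left: "pairing (\<Sum>l\<leftarrow>L. f l) y = (\<Sum>l\<leftarrow>L. pairing (f l) y)"
  by (induction L) (simp_all add: pairing_def lin_form_add)

lemma pairing_one: "pairing one x = eps x"
proof -
  have "forest_pairing [] = (\<lambda>G. if G = [] then 1 else 0)"
    by (simp add: forest_pairing.simps(1) fun_eq_iff)
  then show ?thesis
    unfolding one_def pairing_basis_left eps_lin_form by (rule arg_cong)
qed

lemma pairing_times_pairing:
  "pairing x1 (basis p) * pairing x2 (basis r)
     = lin_form (\<lambda>F1. lin_form (\<lambda>F2. forest_pairing F1 p * forest_pairing F2 r) x2) x1"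
  unfolding pairing_basis_right lin_form_mult_right
  by (simp only: lin_form_fun_mult)

lemma pairing_mult: "pairing (mult x1 x2) y = pair2 pairing x1 x2 (Delta y)"
proof -
  have "pairing (mult x1 x2) y = lin_form (\<lambda>F1. lin_form (\<lambda>F2. lin_form (forest_pairing (F1 @ F2)) y) x2) x1"
    by (simp add: mult_lin_ext pairing_lin_ext_left pairing_basis_left)
  also have "\<dots> = lin_form (\<lambda>G. lin_form (\<lambda>F1. lin_form (\<lambda>F2. forest_pairing (F1 @ F2) G) x2) x1) y"
    by (simp only: lin_form_swap[of _ y x2]) (rule lin_form_swap)
  also have "\<dots> = lin_form (\<lambda>G. \<Sum>c\<leftarrow>cuts_forest G. pairing x1 (basis (fst c)) * pairing x2 (basis (snd c))) y"
    by (simp only: pairing_times_pairing sum_list_lin_form forest_pairing_append split_def)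
  also have "\<dots> = pair2 pairing x1 x2 (Delta y)"
    by (simp add: pair2_lin_form Delta_lin_ext lin_form_lin_ext Delta_forest_def lin_form_sum_list)
  finally show ?thesis .
qed

lemma pairing_mult_basis:
  "pairing (mult x1 x2) (basis F) = (\<Sum>(p, r)\<leftarrow>cuts_forest F. pairing x1 (basis p) * pairing x2 (basis r))"
  by (simp add: pairing_mult pair2_lin_form Delta_basis Delta_forest_def lin_form_sum_list split_def)

lemma pairing_Bplus: "pairing (Bplus d x) y = pairing x (gamma d y)"
proof -
  have "forest_pairing [Node d F] = (\<lambda>G. lin_form (forest_pairing F) (gamma_forest d G))" for F
    by (simp add: gamma_forest_def fun_eq_iff)
  then have "lin_form (forest_pairing F) (gamma d y) = lin_form (forest_pairing [Node d F]) y" for F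
    by (simp add: gamma_lin_ext lin_form_lin_ext)
  then show ?thesis
    by (simp add: pairing_def Bplus_lin_ext lin_form_lin_ext)
qed

lemma form_axioms_pairing: "form_axioms pairing"
  by (simp add: form_axioms_def bilinear_form_pairing pairing_one pairing_mult pairing_Bplus)

lemma form_axioms_on_basis:
  assumes "form_axioms B"
  shows "B (basis F) (basis G) = forest_pairing F G"
proof -
  have bilinear: "bilinear_form B" and one: "\<And>x. B one x = eps x"
    and mult: "\<And>x1 x2 y. B (mult x1 x2) y = pair2 B x1 x2 (Delta y)"
    and Bplus: "\<And>d x y. B (Bplus d x) y = B x (gamma d y)"
    using assms unfolding form_axioms_def by blast+
  show ?thesis
  proof (induction F arbitrary: G rule: forest_induct)
    case Nil
    then show ?case
      using one[of "basis G"] by (simp add: one_def eps_def lookup_basis forest_pairing.simps(1))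
  next
    case (Node d ts)
    have "B (basis [Node d ts]) (basis G) = B (basis ts) (gamma d (basis G))"
      using Bplus[of d "basis ts"] by (simp add: Bplus_lin_ext)
    with Node show ?case
      by (simp add: gamma_lin_ext gamma_forest_def bilinear_form_zero_right[OF bilinear])
  next
    case (Cons t G')
    have "B (basis (t # G')) (basis G) = pair2 B (basis [t]) (basis G') (Delta (basis G))"
      using mult[of "basis [t]" "basis G'"] by simp
    with Cons show ?case
      by (simp add: pair2_lin_form Delta_basis Delta_forest_def lin_form_sum_list
          forest_pairing_Cons split_def)
  qed
qed

lemma form_axioms_unique:
  assumes "form_axioms B"
  shows "B = pairing"
proof (intro ext)
  fix x y
  have bilinear: "bilinear_form B"
    using assms by (simp add: form_axioms_def)
  show "B x y = pairing x y"
    unfolding bilinear_form_expand[OF bilinear, of x y]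
      bilinear_form_expand[OF bilinear_form_pairing, of x y]
    by (simp add: form_axioms_on_basis[OF assms])
qed

lemma pairing_sym: "pairing x y = pairing y x"
  unfolding pairing_def by (subst lin_form_swap) (simp add: forest_pairing_sym)

lemma pairing_homogeneous:
  assumes "homogeneous n x" and "homogeneous m y" and "n \<noteq> m"
  shows "pairing x y = 0"
proof -
  have "forest_pairing F G = 0" if "F \<in> Poly_Mapping.keys x" and "G \<in> Poly_Mapping.keys y" for F G
    using assms that forest_pairing_eq_weight[of F G] by (auto simp: homogeneous_def)
  then show ?thesis
    by (simp add: pairing_def lin_form_def)
qed

section \<open>Nondegeneracy\<close>

function dual_forest :: "'d forest \<Rightarrow> 'd forest" where
  "dual_forest F = (if F = [] then [] else
     (case last F of Node d G \<Rightarrow> dual_forest G @ [Node d (dual_forest (butlast F))]))"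
  by pat_completeness auto
termination
  by (relation "measure weight") (simp_all add: weight_butlast_less weight_last_subforest_less)

declare dual_forest.simps [simp del]

lemma dual_forest_Nil [simp]: "dual_forest [] = []"
  by (simp add: dual_forest.simps)

lemma dual_forest_snoc [simp]: "dual_forest (F @ [Node d G]) = dual_forest G @ [Node d (dual_forest F)]"
  by (subst dual_forest.simps) simp

lemma weight_dual_forest [simp]: "weight (dual_forest F) = weight F"
  by (induction F rule: forest_snoc_induct) simp_all

lemma dual_forest_dual_forest [simp]: "dual_forest (dual_forest F) = F"
  by (induction F rule: forest_snoc_induct) simp_all

function forest_le :: "'d forest \<Rightarrow> 'd forest \<Rightarrow> bool" where
  "forest_le K M = (if K = [] \<or> M = [] then K = M else
     (case (last K, last M) of (Node a H, Node b H') \<Rightarrow>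
        weight H < weight H' \<or>
        (weight H = weight H' \<and> a = b \<and> forest_le (butlast K) (butlast M) \<and> forest_le H H')))"
  by pat_completeness auto
termination
  by (relation "measure (\<lambda>(K, M). weight K)")
    (auto simp: weight_butlast_less intro: weight_last_subforest_less[OF _ sym])

declare forest_le.simps [simp del]

lemma forest_le_Nil_left [simp]: "forest_le [] M \<longleftrightarrow> M = []"
  by (auto simp: forest_le.simps)

lemma forest_le_Nil_right [simp]: "forest_le K [] \<longleftrightarrow> K = []"
  by (simp add: forest_le.simps)

lemma forest_le_snoc [simp]:
  "forest_le (K @ [Node a H]) (M @ [Node b H']) \<longleftrightarrow>
     weight H < weight H' \<or> (weight H = weight H' \<and> a = b \<and> forest_le K M \<and> forest_le H H')"
  by (subst forest_le.simps) simp

lemma forest_le_trans: "forest_le A B \<Longrightarrow> forest_le B C \<Longrightarrow> forest_le A C"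
proof (induction A arbitrary: B C rule: forest_snoc_induct)
  case (snoc A a H)
  then obtain B' b H2 C' c H3 where "B = B' @ [Node b H2]" and "C = C' @ [Node c H3]"
    by (cases B rule: snoc_Node_cases; cases C rule: snoc_Node_cases) auto
  with snoc show ?case
    by auto
qed simp

lemma forest_le_antisym: "forest_le A B \<Longrightarrow> forest_le B A \<Longrightarrow> A = B"
proof (induction A arbitrary: B rule: forest_snoc_induct)
  case (snoc A a H)
  then obtain B' b H2 where "B = B' @ [Node b H2]"
    by (cases B rule: snoc_Node_cases) auto
  with snoc show ?case
    by auto
qed simp

lemma forest_pairing_snoc_snoc:
  "forest_pairing (F @ [Node d G]) (K @ [Node e H])
     = (\<Sum>(p, r)\<leftarrow>cuts_forest K. forest_pairing F (p @ [Node e H]) * forest_pairing [Node d G] r)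
       + (if e = d then (\<Sum>(p, r)\<leftarrow>cuts_forest K. forest_pairing F (p @ H) * forest_pairing G r) else 0)"
proof -
  have graft: "(\<Sum>c\<leftarrow>cuts_forest H.
        forest_pairing F (p @ fst c) * forest_pairing [Node d G] (r @ [Node e (snd c)]))
      = (if e = d then forest_pairing F (p @ H) * forest_pairing G r else 0)" for p r
    using sum_list_cuts_forest_snd_Nil[of
        "\<lambda>p' r'. forest_pairing F (p @ p') * forest_pairing [Node d G] (r @ [Node e r'])" H]
    by (simp add: split_def)
  have "forest_pairing (F @ [Node d G]) (K @ [Node e H])
      = (\<Sum>(p, r)\<leftarrow>cuts_forest K. \<Sum>(p', r')\<leftarrow>cuts (Node e H).
           forest_pairing F (p @ p') * forest_pairing [Node d G] (r @ r'))"
    by (simp add: forest_pairing_append cuts_forest_append sum_list_cut_prod)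
  also have "\<dots> = (\<Sum>(p, r)\<leftarrow>cuts_forest K. forest_pairing F (p @ [Node e H]) * forest_pairing [Node d G] r
      + (if e = d then forest_pairing F (p @ H) * forest_pairing G r else 0))"
    by (simp add: cuts_Node split_def comp_def graft del: forest_pairing.simps(2))
  finally show ?thesis
    by (cases "e = d") (simp_all add: split_def sum_list_addf)
qed

lemma forest_pairing_snoc_snoc_weight_le:
  assumes "weight F \<le> weight H"
  shows "forest_pairing (F @ [Node d G]) (K @ [Node e H])
    = (if e = d then forest_pairing F H * forest_pairing G K else 0)"
proof -
  have "forest_pairing F (p @ [Node e H]) = 0" for p
    using assms forest_pairing_eq_weight[of F "p @ [Node e H]"] by auto
  moreover have "forest_pairing F (p @ H) = 0" if "p \<noteq> []" for p
  proof -
    have "0 < weight p"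
      using that by (simp add: zero_less_iff_neq_zero)
    with assms have "weight F \<noteq> weight (p @ H)"
      by simp
    then show ?thesis
      using forest_pairing_eq_weight by blast
  qed
  then have "(\<Sum>(p, r)\<leftarrow>cuts_forest K. forest_pairing F (p @ H) * forest_pairing G r)
      = forest_pairing F H * forest_pairing G K"
    by (subst sum_list_cuts_forest_fst_Nil) simp_all
  ultimately show ?thesis
    by (simp add: forest_pairing_snoc_snoc split_def del: forest_pairing.simps(2))
qed

lemma forest_le_dual_forest_if_pairing_nonzero:
  "forest_pairing F K \<noteq> 0 \<Longrightarrow> forest_le K (dual_forest F)"
proof (induction F arbitrary: K rule: forest_snoc_induct)
  case Nil
  then show ?case
    by (cases K) simp_all
next
  case (snoc F d G)
  then obtain K' e H where K: "K = K' @ [Node e H]"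
    by (cases K rule: snoc_Node_cases) (simp_all add: forest_pairing_Nil_right)
  show ?case
  proof (cases "weight H < weight F")
    case False
    then have "e = d" and "forest_pairing F H \<noteq> 0" and "forest_pairing G K' \<noteq> 0"
      using snoc.prems K forest_pairing_snoc_snoc_weight_le[of F H d G K' e] by (simp_all split: if_splits)
    with K snoc.IH show ?thesis
      using forest_pairing_eq_weight[of F H] by simp
  qed (simp add: K)
qed

lemma forest_pairing_dual_forest: "forest_pairing F (dual_forest F) = 1"
  by (induction F rule: forest_snoc_induct) (simp_all add: forest_pairing_snoc_snoc_weight_le)

definition forest_below :: "'d forest \<Rightarrow> 'd forest set" where
  "forest_below G = {K. weight K = weight G \<and> forest_le K G \<and> K \<noteq> G}"

lemma finite_forest_below: "finite (forest_below (G :: 'd::finite forest))"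
  by (rule finite_subset[OF _ finite_weight_le[of "weight G"]]) (auto simp: forest_below_def)

lemma card_forest_below_less:
  assumes "K \<in> forest_below (G :: 'd::finite forest)"
  shows "card (forest_below K) < card (forest_below G)"
proof (rule psubset_card_mono[OF finite_forest_below])
  have "forest_below K \<subseteq> forest_below G"
  proof
    fix L
    assume "L \<in> forest_below K"
    with assms have "weight L = weight G" and "forest_le L K" and "forest_le K G" and "L \<noteq> K"
      by (simp_all add: forest_below_def)
    moreover from this have "L \<noteq> G"
      using forest_le_antisym by blast
    ultimately show "L \<in> forest_below G"
      by (auto simp: forest_below_def intro: forest_le_trans)
  qed
  moreover have "K \<in> forest_below G - forest_below K"
    using assms by (simp add: forest_below_def)
  ultimately show "forest_below K \<subset> forest_below G"
    by blast
qed

lemma forest_pairing_dual_forest_nonzero: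
  assumes "forest_pairing (dual_forest G) K \<noteq> 0"
  shows "K = G \<or> K \<in> forest_below G"
proof -
  have "forest_le K G"
    using forest_le_dual_forest_if_pairing_nonzero[OF assms] by simp
  moreover have "weight K = weight G"
    using forest_pairing_eq_weight[OF assms] by simp
  ultimately show ?thesis
    by (auto simp: forest_below_def)
qed

lemma homogeneous_diff: "homogeneous n a \<Longrightarrow> homogeneous n b \<Longrightarrow> homogeneous n (a - b)"
  unfolding homogeneous_def using keys_diff[of a b] by blast

lemma homogeneous_sum: "(\<And>a. a \<in> A \<Longrightarrow> homogeneous n (f a)) \<Longrightarrow> homogeneous n (sum f A)"
  unfolding homogeneous_def using keys_sum[of f A] by blast

lemma homogeneous_smult: "homogeneous n a \<Longrightarrow> homogeneous n (smult c a)"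
  unfolding homogeneous_def using keys_smult[of c a] by blast

lemma homogeneous_basis: "homogeneous (weight F) (basis F)"
  by (simp add: homogeneous_def basis_def)

lemma dual_element_exists:
  fixes G :: "'d::finite forest"
  shows "\<exists>x. homogeneous (weight G) x \<and> (\<forall>K. pairing x (basis K) = (if G = K then 1 else 0))"
proof (induction "card (forest_below G)" arbitrary: G rule: less_induct)
  case less
  then obtain y where y: "\<And>G'. G' \<in> forest_below G \<Longrightarrow>
      homogeneous (weight G') (y G') \<and> (\<forall>K. pairing (y G') (basis K) = (if G' = K then 1 else 0))"
    using card_forest_below_less by metis
  \<comment> \<open>basis (dual_forest G) pairs to 1 with G and to 0 outside forest_below G;
    the dual elements of the forests below G remove the remaining pairings.\<close>
  define x where "x = basis (dual_forest G)
    - (\<Sum>G'\<in>forest_below G. smult (forest_pairing (dual_forest G) G') (y G'))"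
  have "homogeneous (weight G) x"
    unfolding x_def using homogeneous_basis[of "dual_forest G"] y
    by (intro homogeneous_diff homogeneous_sum homogeneous_smult) (auto simp: forest_below_def)
  moreover have "pairing x (basis K) = (if G = K then 1 else 0)" for K
  proof -
    have "pairing x (basis K) = forest_pairing (dual_forest G) K
        - (if K \<in> forest_below G then forest_pairing (dual_forest G) K else 0)"
      by (simp add: x_def pairing_diff_left pairing_sum_left pairing_smult_left y if_distrib
          sum.delta[OF finite_forest_below] cong: if_cong)
    also have "\<dots> = (if G = K then 1 else 0)"
      using forest_pairing_dual_forest_nonzero[of G K] forest_pairing_dual_forest[of G]
      by (auto simp: forest_below_def forest_pairing_sym)
    finally show ?thesis .
  qed
  ultimately show ?case
    by blast
qed

definition dual_basis :: "'d::finite forest \<Rightarrow> 'd H" where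
  "dual_basis G = (SOME x. homogeneous (weight G) x \<and> (\<forall>K. pairing x (basis K) = (if G = K then 1 else 0)))"

lemma homogeneous_dual_basis: "homogeneous (weight G) (dual_basis G)"
  and pairing_dual_basis_basis: "pairing (dual_basis G) (basis K) = (if G = K then 1 else 0)"
  using someI_ex[OF dual_element_exists[of G]] unfolding dual_basis_def by blast+

lemma pairing_basis_dual_basis: "pairing (basis K) (dual_basis G) = (if G = K then 1 else 0)"
  by (simp add: pairing_sym[of "basis K"] pairing_dual_basis_basis)

lemma lookup_eq_pairing_dual_basis: "Poly_Mapping.lookup z G = pairing (dual_basis G) z"
proof -
  have "pairing (dual_basis G) z = lin_form (\<lambda>K. if K = G then 1 else 0) z"
    by (subst linear_form_expand[OF linear_form_pairing_right]) (simp add: pairing_dual_basis_basis eq_commute)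
  then show ?thesis
    by (simp add: lin_form_indicator)
qed

lemma pairing_basis_eq_0_imp_eq_0:
  fixes z :: "'d::finite H"
  assumes "\<And>G. pairing z (basis G) = 0"
  shows "z = 0"
proof (rule poly_mapping_eqI)
  fix G
  have "Poly_Mapping.lookup z G = pairing z (dual_basis G)"
    by (simp add: lookup_eq_pairing_dual_basis pairing_sym)
  also have "\<dots> = 0"
    by (subst linear_form_expand[OF linear_form_pairing_right]) (simp add: assms)
  finally show "Poly_Mapping.lookup z G = Poly_Mapping.lookup 0 G"
    by simp
qed

lemma dual_basis_unique:
  fixes x :: "'d::finite H"
  assumes "\<And>G. pairing x (basis G) = (if F = G then 1 else 0)"
  shows "x = dual_basis F"
proof -
  have "x - dual_basis F = 0"
    by (rule pairing_basis_eq_0_imp_eq_0) (simp add: pairing_diff_left assms pairing_dual_basis_basis)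
  then show ?thesis
    by simp
qed

lemma dual_basis_Nil: "dual_basis [] = (one :: 'd::finite H)"
  by (rule dual_basis_unique[symmetric]) (simp add: pairing_one eps_def lookup_basis)

lemma is_basis_ofI:
  assumes "\<And>i. e i \<in> V"
    and "\<And>x. x \<in> V \<Longrightarrow> \<exists>c. x = lincomb c e"
    and "\<And>c. lincomb c e = 0 \<Longrightarrow> c = 0"
  shows "is_basis_of V e"
  unfolding is_basis_of_def
proof (intro conjI allI ballI)
  fix x
  assume "x \<in> V"
  then obtain c where "x = lincomb c e"
    using assms(2) by blast
  moreover have "c' = c" if "x = lincomb c' e" for c'
    using assms(3)[of "c' - c"] \<open>x = lincomb c e\<close> that by (simp add: lincomb_lin_ext lin_ext_diff)
  ultimately show "\<exists>!c. x = lincomb c e"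
    by blast
qed (rule assms(1))

lemma finite_pairing_basis_nonzero: "finite {F. pairing x (basis F) \<noteq> 0}"
  for x :: "'d::finite H"
proof (rule finite_subset)
  show "{F. pairing x (basis F) \<noteq> 0} \<subseteq> (\<Union>K\<in>Poly_Mapping.keys x. {F. weight F \<le> weight K})"
  proof
    fix F
    assume "F \<in> {F. pairing x (basis F) \<noteq> 0}"
    then have "(\<Sum>K\<in>Poly_Mapping.keys x. Poly_Mapping.lookup x K * forest_pairing K F) \<noteq> 0"
      by (simp add: pairing_basis_right lin_form_def)
    then obtain K where "K \<in> Poly_Mapping.keys x" and "Poly_Mapping.lookup x K * forest_pairing K F \<noteq> 0"
      by (rule sum.not_neutral_contains_not_neutral)
    then show "F \<in> (\<Union>K\<in>Poly_Mapping.keys x. {F. weight F \<le> weight K})"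
      using forest_pairing_eq_weight by fastforce
  qed
  show "finite (\<Union>K\<in>Poly_Mapping.keys x. {F :: 'd forest. weight F \<le> weight K})"
    by (intro finite_UN_I finite_keys finite_weight_le)
qed

lemma pairing_lin_ext_dual_basis: "pairing (lin_ext dual_basis c) (basis G) = Poly_Mapping.lookup c G"
  by (simp add: pairing_lin_ext_left pairing_dual_basis_basis lin_form_indicator eq_commute)

lemma is_basis_of_dual_basis: "is_basis_of UNIV (dual_basis :: 'd::finite forest \<Rightarrow> 'd H)"
proof (rule is_basis_ofI)
  fix x :: "'d H"
  let ?c = "Abs_poly_mapping (\<lambda>F. pairing x (basis F))"
  have "x - lin_ext dual_basis ?c = 0"
    using finite_pairing_basis_nonzero[of x]
    by (intro pairing_basis_eq_0_imp_eq_0) (simp add: pairing_diff_left pairing_lin_ext_dual_basis)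
  then show "\<exists>c. x = lincomb c dual_basis"
    by (auto simp: lincomb_lin_ext)
next
  fix c :: "'d forest \<Rightarrow>\<^sub>0 rat"
  assume "lincomb c dual_basis = 0"
  then show "c = 0"
    using pairing_lin_ext_dual_basis[of c] by (intro poly_mapping_eqI) (simp add: lincomb_lin_ext)
qed simp

section \<open>The coproduct of the dual basis and the primitive elements\<close>

lemma pair2_pairing_bilinear:
  "pair2 pairing x1 x2 T = lin_form (\<lambda>F1. lin_form (\<lambda>F2. pair2 pairing (basis F1) (basis F2) T) x2) x1"
proof -
  have "pair2 pairing x1 x2 T
      = lin_form (\<lambda>c. lin_form (\<lambda>F1. lin_form (\<lambda>F2.
          forest_pairing F1 (fst c) * forest_pairing F2 (snd c)) x2) x1) T"
    by (simp only: pair2_lin_form pairing_times_pairing)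
  also have "\<dots> = lin_form (\<lambda>F1. lin_form (\<lambda>F2.
      lin_form (\<lambda>c. forest_pairing F1 (fst c) * forest_pairing F2 (snd c)) T) x2) x1"
    by (simp only: lin_form_swap[of _ x1 T] lin_form_swap[of _ x2 T])
  finally show ?thesis
    by (simp add: pair2_lin_form)
qed

lemma lookup_eq_pair2_dual_basis:
  "Poly_Mapping.lookup T (A, B) = pair2 pairing (dual_basis A) (dual_basis B) T"
proof -
  have "(\<lambda>c. pairing (dual_basis A) (basis (fst c)) * pairing (dual_basis B) (basis (snd c)))
      = (\<lambda>c. if c = (A, B) then 1 else 0)"
    by (simp add: fun_eq_iff pairing_dual_basis_basis prod_eq_iff)
  then show ?thesis
    by (simp add: pair2_lin_form lin_form_indicator)
qed

lemma pair2_pairing_basis_eq_0_imp_eq_0: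
  fixes T :: "'d::finite HH"
  assumes "\<And>A B. pair2 pairing (basis A) (basis B) T = 0"
  shows "T = 0"
proof (rule poly_mapping_eqI)
  fix c :: "'d forest \<times> 'd forest"
  have "Poly_Mapping.lookup T c = 0"
    by (cases c) (simp add: lookup_eq_pair2_dual_basis pair2_pairing_bilinear[of "dual_basis _"] assms)
  then show "Poly_Mapping.lookup T c = Poly_Mapping.lookup 0 c"
    by simp
qed

lemma pair2_pairing_tensor: "pair2 pairing x1 x2 (tensor a b) = pairing x1 a * pairing x2 b"
proof -
  have "pair2 pairing x1 x2 (tensor a b)
      = lin_form (\<lambda>F. pairing x1 (basis F) * lin_form (\<lambda>G. pairing x2 (basis G)) b) a"
    by (simp add: pair2_lin_form tensor_lin_ext lin_form_lin_ext lin_form_fun_mult)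
  also have "\<dots> = lin_form (\<lambda>F. pairing x1 (basis F)) a * lin_form (\<lambda>G. pairing x2 (basis G)) b"
    by (simp only: lin_form_mult_right)
  also have "\<dots> = pairing x1 a * pairing x2 b"
    by (simp only: linear_form_expand[OF linear_form_pairing_right, symmetric])
  finally show ?thesis .
qed

lemma take_drop_eq_iff:
  assumes "i \<le> length ts"
  shows "take i ts = A \<and> drop i ts = B \<longleftrightarrow> i = length A \<and> ts = A @ B"
proof
  assume "take i ts = A \<and> drop i ts = B"
  then show "i = length A \<and> ts = A @ B"
    using assms append_take_drop_id[of i ts] length_take[of i ts] by auto
qed auto

lemma sum_take_drop_eq:
  "(\<Sum>i = 0..length ts. (if take i ts = A then 1 else 0) * (if drop i ts = B then 1 else 0 :: rat))
     = (if ts = A @ B then 1 else 0)"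
proof -
  have "(\<Sum>i = 0..length ts. (if take i ts = A then 1 else 0) * (if drop i ts = B then 1 else 0 :: rat))
      = (\<Sum>i = 0..length ts. if i = length A \<and> ts = A @ B then 1 else 0)"
    by (rule sum.cong[OF refl]) (simp flip: take_drop_eq_iff)
  also have "\<dots> = (if ts = A @ B then 1 else 0)"
    by (cases "ts = A @ B") simp_all
  finally show ?thesis .
qed

lemma Delta_dual_basis:
  "Delta (dual_basis ts) = (\<Sum>i = 0..length ts. tensor (dual_basis (take i ts)) (dual_basis (drop i ts)))"
  for ts :: "'d::finite forest"
proof -
  let ?T = "\<Sum>i = 0..length ts. tensor (dual_basis (take i ts)) (dual_basis (drop i ts))"
  have "Delta (dual_basis ts) - ?T = 0"
  proof (rule pair2_pairing_basis_eq_0_imp_eq_0)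
    fix A B :: "'d forest"
    have "pair2 pairing (basis A) (basis B) (Delta (dual_basis ts)) = pairing (dual_basis ts) (basis (A @ B))"
      by (simp add: pairing_mult[symmetric] pairing_sym)
    also have "\<dots> = pair2 pairing (basis A) (basis B) ?T"
      by (simp add: pair2_sum pair2_pairing_tensor pairing_basis_dual_basis sum_take_drop_eq
          pairing_dual_basis_basis)
    finally show "pair2 pairing (basis A) (basis B) (Delta (dual_basis ts) - ?T) = 0"
      by (simp add: pair2_diff)
  qed
  then show ?thesis
    by simp
qed

lemma primitive_dual_basis_tree: "primitive (dual_basis [t] :: 'd::finite H)"
  by (simp add: primitive_def Delta_dual_basis dual_basis_Nil add.commute)

lemma pairing_primitive_append:
  assumes "primitive x"
  shows "pairing x (basis (A @ B))
    = pairing x (basis A) * (if B = [] then 1 else 0) + (if A = [] then 1 else 0) * pairing x (basis B)"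
proof -
  have "pairing x (basis (A @ B)) = pair2 pairing (basis A) (basis B) (Delta x)"
    by (simp add: pairing_mult[symmetric] pairing_sym)
  also have "\<dots> = pairing x (basis A) * pairing one (basis B) + pairing one (basis A) * pairing x (basis B)"
    using assms by (simp add: primitive_def pair2_add pair2_pairing_tensor pairing_sym)
  finally show ?thesis
    by (simp add: pairing_one eps_def lookup_basis eq_commute)
qed

lemma pairing_primitive_basis_eq_0:
  assumes "primitive x" and "\<And>t. F \<noteq> [t]"
  shows "pairing x (basis F) = 0"
proof (cases F)
  case Nil
  then show ?thesis
    using pairing_primitive_append[OF assms(1), of "[]" "[]"] by simp
next
  case (Cons t F')
  with assms(2) have "F' \<noteq> []"
    by auto
  with Cons show ?thesis
    using pairing_primitive_append[OF assms(1), of "[t]" F'] by simp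
qed

lemma pairing_lin_ext_dual_basis_tree:
  "pairing (lin_ext (\<lambda>t. dual_basis [t]) c) (basis G)
     = (if \<exists>u. G = [u] then Poly_Mapping.lookup c (hd G) else 0)"
proof -
  have "pairing (lin_ext (\<lambda>t. dual_basis [t]) c) (basis G) = lin_form (\<lambda>t. if [t] = G then 1 else 0) c"
    by (simp add: pairing_lin_ext_left pairing_dual_basis_basis)
  moreover have "(\<lambda>t. if [t] = G then 1 else 0) = (\<lambda>t. 0 :: rat)" if "\<nexists>u. G = [u]"
    using that by (auto simp: fun_eq_iff)
  ultimately show ?thesis
    by (auto simp: lin_form_indicator)
qed

lemma is_basis_of_primitive: "is_basis_of {x. primitive x} (\<lambda>t. dual_basis [t] :: 'd::finite H)"
proof (rule is_basis_ofI)
  fix x :: "'d H"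
  assume "x \<in> {x. primitive x}"
  then have primitive: "primitive x"
    by simp
  let ?c = "Abs_poly_mapping (\<lambda>t. pairing x (basis [t]))"
  have "finite {t. pairing x (basis [t]) \<noteq> 0}"
    using finite_vimageI[OF finite_pairing_basis_nonzero[of x], of "\<lambda>t. [t]"] by (simp add: inj_on_def)
  then have "x - lin_ext (\<lambda>t. dual_basis [t]) ?c = 0"
    using pairing_primitive_basis_eq_0[OF primitive]
    by (intro pairing_basis_eq_0_imp_eq_0) (auto simp: pairing_diff_left pairing_lin_ext_dual_basis_tree)
  then show "\<exists>c. x = lincomb c (\<lambda>t. dual_basis [t])"
    by (auto simp: lincomb_lin_ext)
next
  fix c :: "'d ptree \<Rightarrow>\<^sub>0 rat"
  assume "lincomb c (\<lambda>t. dual_basis [t]) = 0"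
  then show "c = 0"
    using pairing_lin_ext_dual_basis_tree[of c "[_]"] by (intro poly_mapping_eqI) (simp add: lincomb_lin_ext)
qed (simp add: primitive_dual_basis_tree)

section \<open>The antipode\<close>

text \<open>Solutions of S * id = eta eps and id * S = eta eps on basis forests, by recursion on the weight.\<close>

function left_antipode :: "'d forest \<Rightarrow> 'd H" where
  "left_antipode F = (if F = [] then one else
     - (\<Sum>c\<leftarrow>cuts_forest F. if snd c = [] then 0 else mult (left_antipode (fst c)) (basis (snd c))))"
  by pat_completeness auto
termination
  by (relation "measure weight") (auto intro: weight_fst_cut_less)

function right_antipode :: "'d forest \<Rightarrow> 'd H" where
  "right_antipode F = (if F = [] then one else
     - (\<Sum>c\<leftarrow>cuts_forest F. if fst c = [] then 0 else mult (basis (fst c)) (right_antipode (snd c))))"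
  by pat_completeness auto
termination
  by (relation "measure weight") (auto intro: weight_snd_cut_less)

declare left_antipode.simps [simp del] right_antipode.simps [simp del]

definition conv_forest :: "('d forest \<Rightarrow> 'd H) \<Rightarrow> ('d forest \<Rightarrow> 'd H) \<Rightarrow> 'd forest \<Rightarrow> 'd H" where
  "conv_forest f g F = (\<Sum>c\<leftarrow>cuts_forest F. mult (f (fst c)) (g (snd c)))"

definition unit_forest :: "'d forest \<Rightarrow> 'd H" where
  "unit_forest F = (if F = [] then one else 0)"

lemma mult_unit_forest_left: "mult (unit_forest p) x = (if p = [] then x else 0)"
  by (simp add: unit_forest_def)

lemma mult_unit_forest_right: "mult x (unit_forest p) = (if p = [] then x else 0)"
  by (simp add: unit_forest_def)

lemma conv_forest_left_antipode: "conv_forest left_antipode basis F = unit_forest F"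
proof (cases "F = []")
  case True
  then show ?thesis
    by (simp add: conv_forest_def unit_forest_def left_antipode.simps one_def)
next
  case False
  have "(\<Sum>c\<leftarrow>cuts_forest F. if snd c = [] then mult (left_antipode (fst c)) (basis (snd c)) else 0)
      = left_antipode F"
    using sum_list_cuts_forest_snd_Nil[of "\<lambda>p r. if r = [] then mult (left_antipode p) (basis r) else 0" F]
    by (simp add: split_def one_def[symmetric])
  with False show ?thesis
    unfolding conv_forest_def
    by (subst sum_list_split_if[where P = "\<lambda>c. snd c = []"])
      (simp add: unit_forest_def left_antipode.simps[of F])
qed

lemma conv_forest_right_antipode: "conv_forest basis right_antipode F = unit_forest F"
proof (cases "F = []")
  case True
  then show ?thesis
    by (simp add: conv_forest_def unit_forest_def right_antipode.simps one_def)
next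
  case False
  have "(\<Sum>c\<leftarrow>cuts_forest F. if fst c = [] then mult (basis (fst c)) (right_antipode (snd c)) else 0)
      = right_antipode F"
    using sum_list_cuts_forest_fst_Nil[of "\<lambda>p r. if p = [] then mult (basis p) (right_antipode r) else 0" F]
    by (simp add: split_def one_def[symmetric])
  with False show ?thesis
    unfolding conv_forest_def
    by (subst sum_list_split_if[where P = "\<lambda>c. fst c = []"])
      (simp add: unit_forest_def right_antipode.simps[of F])
qed

lemma conv_forest_inverse_unique:
  assumes left: "\<And>F. conv_forest f basis F = unit_forest F"
    and right: "\<And>F. conv_forest basis g F = unit_forest F"
  shows "f F = g F"
proof -
  have "f F = (\<Sum>(p, r)\<leftarrow>cuts_forest F. mult (f p) (conv_forest basis g r))"
    by (subst sum_list_cuts_forest_snd_Nil) (simp_all add: right mult_unit_forest_right)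
  also have "\<dots> = (\<Sum>(p, r)\<leftarrow>cuts_forest F. \<Sum>(a, b)\<leftarrow>cuts_forest r. mult (f p) (mult (basis a) (g b)))"
    by (simp add: conv_forest_def mult_sum_list_right split_def)
  also have "\<dots> = (\<Sum>(p, r)\<leftarrow>cuts_forest F. \<Sum>(a, b)\<leftarrow>cuts_forest p. mult (f a) (mult (basis b) (g r)))"
    by (rule cuts_forest_coassoc[symmetric])
  also have "\<dots> = (\<Sum>(p, r)\<leftarrow>cuts_forest F. mult (conv_forest f basis p) (g r))"
    by (simp add: conv_forest_def mult_sum_list_left split_def mult_assoc)
  also have "\<dots> = g F"
    by (subst sum_list_cuts_forest_fst_Nil) (simp_all add: left mult_unit_forest_left)
  finally show ?thesis .
qed

lemma left_antipode_eq_right_antipode: "left_antipode F = right_antipode F"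
  by (rule conv_forest_inverse_unique[OF conv_forest_left_antipode conv_forest_right_antipode])

lemma conv_forest_basis_left_antipode: "conv_forest basis left_antipode F = unit_forest F"
  using conv_forest_right_antipode[of F] by (simp add: conv_forest_def left_antipode_eq_right_antipode)

lemma conv_basis: "conv f g (basis F) = conv_forest (\<lambda>p. f (basis p)) (\<lambda>r. g (basis r)) F"
  by (simp add: conv_lin_ext Delta_basis Delta_forest_def lin_ext_sum_list conv_forest_def)

lemma conv_eq_lin_ext: "conv f g x = lin_ext (\<lambda>F. conv f g (basis F)) x"
  by (simp add: conv_lin_ext Delta_lin_ext lin_ext_lin_ext)

lemma smult_eps_one: "smult (eps x) one = lin_ext unit_forest x"
proof -
  have "linear_map (\<lambda>x. smult (eps x) one)"
    by (simp add: linear_map_def eps_def lookup_add smult_add_left)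
  then have "smult (eps x) one = lin_ext (\<lambda>F. smult (eps (basis F)) one) x"
    by (rule linear_map_expand)
  also have "(\<lambda>F. smult (eps (basis F)) one) = unit_forest"
    by (simp add: fun_eq_iff unit_forest_def eps_def lookup_basis)
  finally show ?thesis .
qed

lemma is_antipode_left_antipode: "is_antipode (lin_ext left_antipode)"
  unfolding is_antipode_def
proof (intro conjI allI)
  fix x
  show "conv (lin_ext left_antipode) id x = smult (eps x) one"
    by (simp add: conv_eq_lin_ext[of _ id] conv_basis conv_forest_left_antipode smult_eps_one)
  show "conv id (lin_ext left_antipode) x = smult (eps x) one"
    by (simp add: conv_eq_lin_ext[of id] conv_basis conv_forest_basis_left_antipode smult_eps_one)
qed (rule linear_map_lin_ext)

lemma is_antipode_unique:
  assumes "is_antipode S"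
  shows "S = lin_ext left_antipode"
proof
  fix x
  have linear: "linear_map S" and left: "\<And>x. conv S id x = smult (eps x) one"
    using assms by (auto simp: is_antipode_def)
  have "S (basis F) = left_antipode F" for F
  proof (rule conv_forest_inverse_unique[OF _ conv_forest_basis_left_antipode])
    fix p
    show "conv_forest (\<lambda>p. S (basis p)) basis p = unit_forest p"
      using left[of "basis p"] by (simp add: conv_basis unit_forest_def eps_def lookup_basis)
  qed
  then show "S x = lin_ext left_antipode x"
    using linear_map_expand[OF linear, of x] by simp
qed

lemma antipode_eq_lin_ext_left_antipode: "antipode = lin_ext left_antipode"
  unfolding antipode_def using is_antipode_left_antipode is_antipode_unique by (rule the_equality)

definition conv_pairing ::
  "('d forest \<Rightarrow> 'd forest \<Rightarrow> rat) \<Rightarrow> ('d forest \<Rightarrow> 'd forest \<Rightarrow> rat) \<Rightarrow> 'd forest \<Rightarrow> 'd forest \<Rightarrow> rat"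
  where "conv_pairing P Q F G = (\<Sum>(p, r)\<leftarrow>cuts_forest F. \<Sum>(p', r')\<leftarrow>cuts_forest G. P p p' * Q r r')"

definition counit_pairing :: "'d forest \<Rightarrow> 'd forest \<Rightarrow> rat" where
  "counit_pairing F G = (if F = [] \<and> G = [] then 1 else 0)"

lemma conv_pairing_counit_right: "conv_pairing P counit_pairing F G = P F G"
proof -
  have "(\<Sum>(p', r')\<leftarrow>cuts_forest G. P p p' * counit_pairing r r') = (if r = [] then P p G else 0)" for p r
    by (subst sum_list_cuts_forest_snd_Nil) (simp_all add: counit_pairing_def)
  then show ?thesis
    unfolding conv_pairing_def by (subst sum_list_cuts_forest_snd_Nil) simp_all
qed

lemma conv_pairing_counit_left: "conv_pairing counit_pairing Q F G = Q F G"
proof -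
  have "(\<Sum>(p', r')\<leftarrow>cuts_forest G. counit_pairing p p' * Q r r') = (if p = [] then Q r G else 0)" for p r
    by (subst sum_list_cuts_forest_fst_Nil) (simp_all add: counit_pairing_def)
  then show ?thesis
    unfolding conv_pairing_def by (subst sum_list_cuts_forest_fst_Nil) simp_all
qed

lemma conv_pairing_assoc: "conv_pairing (conv_pairing P Q) R F G = conv_pairing P (conv_pairing Q R) F G"
proof -
  note coassoc = cuts_forest_coassoc[unfolded split_def]
  have "conv_pairing (conv_pairing P Q) R F G
      = (\<Sum>c\<leftarrow>cuts_forest F. \<Sum>c'\<leftarrow>cuts_forest G. \<Sum>a\<leftarrow>cuts_forest (fst c). \<Sum>a'\<leftarrow>cuts_forest (fst c').
           P (fst a) (fst a') * Q (snd a) (snd a') * R (snd c) (snd c'))"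
    by (simp add: conv_pairing_def split_def sum_list_mult_const)
  also have "\<dots> = (\<Sum>c\<leftarrow>cuts_forest F. \<Sum>a\<leftarrow>cuts_forest (fst c). \<Sum>c'\<leftarrow>cuts_forest G. \<Sum>a'\<leftarrow>cuts_forest (fst c').
           P (fst a) (fst a') * Q (snd a) (snd a') * R (snd c) (snd c'))"
    by (simp only: sum_list_swap[where xs = "cuts_forest G"])
  also have "\<dots> = (\<Sum>c\<leftarrow>cuts_forest F. \<Sum>a\<leftarrow>cuts_forest (fst c). \<Sum>c'\<leftarrow>cuts_forest G. \<Sum>a'\<leftarrow>cuts_forest (snd c').
           P (fst a) (fst c') * Q (snd a) (fst a') * R (snd c) (snd a'))"
    by (simp only: coassoc[of "\<lambda>x y z. P _ x * Q _ y * R _ z" G])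
  also have "\<dots> = (\<Sum>c\<leftarrow>cuts_forest F. \<Sum>a\<leftarrow>cuts_forest (snd c). \<Sum>c'\<leftarrow>cuts_forest G. \<Sum>a'\<leftarrow>cuts_forest (snd c').
           P (fst c) (fst c') * Q (fst a) (fst a') * R (snd a) (snd a'))"
    by (rule coassoc)
  also have "\<dots> = conv_pairing P (conv_pairing Q R) F G"
    by (simp add: conv_pairing_def split_def sum_list_const_mult mult.assoc
        sum_list_swap[where ys = "cuts_forest G"])
  finally show ?thesis .
qed

lemma pairing_conv_forest:
  "pairing (conv_forest f g G) (basis F)
     = conv_pairing (\<lambda>p p'. pairing (f p) (basis p')) (\<lambda>r r'. pairing (g r) (basis r')) G F"
  by (simp add: conv_forest_def conv_pairing_def pairing_sum_list_left pairing_mult_basis split_def)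

lemma pairing_unit_forest: "pairing (unit_forest G) (basis F) = counit_pairing G F"
  by (simp add: unit_forest_def counit_pairing_def pairing_one eps_def lookup_basis)

lemma conv_pairing_swap: "conv_pairing P Q F G = conv_pairing (\<lambda>p p'. P p' p) (\<lambda>r r'. Q r' r) G F"
  unfolding conv_pairing_def split_def by (rule sum_list_swap)

lemma counit_pairing_sym: "counit_pairing F G = counit_pairing G F"
  by (auto simp: counit_pairing_def)

lemma conv_pairing_left_antipode_left:
  "conv_pairing (\<lambda>F G. pairing (basis F) (left_antipode G)) forest_pairing F G = counit_pairing F G"
proof -
  have swap_left:
    "(\<lambda>p p'. pairing (basis p') (left_antipode p)) = (\<lambda>p p'. pairing (left_antipode p) (basis p'))"
    by (intro ext) (rule pairing_sym)
  have swap_right: "(\<lambda>r r'. forest_pairing r' r) = (\<lambda>r r'. pairing (basis r) (basis r'))"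
    by (intro ext) (simp add: forest_pairing_sym)
  have "conv_pairing (\<lambda>F G. pairing (basis F) (left_antipode G)) forest_pairing F G
      = conv_pairing (\<lambda>p p'. pairing (basis p') (left_antipode p)) (\<lambda>r r'. forest_pairing r' r) G F"
    by (rule conv_pairing_swap)
  also have "\<dots> = pairing (conv_forest left_antipode basis G) (basis F)"
    unfolding pairing_conv_forest by (subst swap_left, subst swap_right, rule refl)
  also have "\<dots> = counit_pairing F G"
    by (simp add: conv_forest_left_antipode pairing_unit_forest counit_pairing_sym)
  finally show ?thesis .
qed

lemma conv_pairing_left_antipode_right:
  "conv_pairing forest_pairing (\<lambda>F G. pairing (left_antipode F) (basis G)) F G = counit_pairing F G"
proof -
  have "conv_pairing forest_pairing (\<lambda>F G. pairing (left_antipode F) (basis G)) F G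
      = pairing (conv_forest basis left_antipode F) (basis G)"
    by (simp add: pairing_conv_forest)
  then show ?thesis
    by (simp add: conv_forest_basis_left_antipode pairing_unit_forest)
qed

lemma left_antipode_adjoint: "pairing (basis F) (left_antipode G) = pairing (left_antipode F) (basis G)"
proof -
  let ?L = "\<lambda>F G. pairing (basis F) (left_antipode G)"
    and ?R = "\<lambda>F G. pairing (left_antipode F) (basis G)"
  have "?L F G = conv_pairing ?L (conv_pairing forest_pairing ?R) F G"
    by (simp add: conv_pairing_left_antipode_right[abs_def] conv_pairing_counit_right)
  also have "\<dots> = conv_pairing (conv_pairing ?L forest_pairing) ?R F G"
    by (simp only: conv_pairing_assoc)
  also have "\<dots> = ?R F G"
    by (simp add: conv_pairing_left_antipode_left[abs_def] conv_pairing_counit_left)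
  finally show ?thesis .
qed

lemma pairing_antipode: "pairing (antipode x) y = pairing x (antipode y)"
proof -
  have "pairing (antipode x) y = lin_form (\<lambda>F. lin_form (\<lambda>G. pairing (left_antipode F) (basis G)) y) x"
    by (simp add: antipode_eq_lin_ext_left_antipode pairing_lin_ext_left
        linear_form_expand[OF linear_form_pairing_right, of "left_antipode _" y])
  also have "\<dots> = lin_form (\<lambda>G. lin_form (\<lambda>F. pairing (basis F) (left_antipode G)) x) y"
    by (subst lin_form_swap) (simp add: left_antipode_adjoint)
  also have "\<dots> = pairing x (antipode y)"
    by (simp add: antipode_eq_lin_ext_left_antipode pairing_lin_ext_right
        linear_form_expand[OF linear_form_pairing_left, of x "left_antipode _"])
  finally show ?thesis .
qed

theorem mainTheorem4:
  fixes dummy :: "'d::finite"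
  shows "(\<exists>!B :: 'd H \<Rightarrow> 'd H \<Rightarrow> rat. form_axioms B) \<and>
    (\<forall>B :: 'd H \<Rightarrow> 'd H \<Rightarrow> rat. form_axioms B \<longrightarrow>
       (\<forall>n m x y. homogeneous n x \<and> homogeneous m y \<and> n \<noteq> m \<longrightarrow> B x y = 0) \<and>
       (\<forall>x y. B x y = B y x) \<and>
       (\<forall>x. (\<forall>y. B x y = 0) \<longrightarrow> x = 0) \<and>
       (\<forall>y. (\<forall>x. B x y = 0) \<longrightarrow> y = 0) \<and>
       (\<forall>x y. B (antipode x) y = B x (antipode y)) \<and>
       (\<exists>e :: 'd forest \<Rightarrow> 'd H. \<forall>F G. B (e F) (basis G) = (if F = G then 1 else 0)) \<and>
       (\<forall>e :: 'd forest \<Rightarrow> 'd H. (\<forall>F G. B (e F) (basis G) = (if F = G then 1 else 0)) \<longrightarrow>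
          is_basis_of UNIV e \<and>
          (\<forall>F. homogeneous (weight F) (e F)) \<and>
          is_basis_of {x. primitive x} (\<lambda>t :: 'd ptree. e [t]) \<and>
          (\<forall>ts. Delta (e ts) = (\<Sum>i = 0..length ts. tensor (e (take i ts)) (e (drop i ts))))))"
proof (intro conjI allI impI)
  show "\<exists>!B :: 'd H \<Rightarrow> 'd H \<Rightarrow> rat. form_axioms B"
    using form_axioms_pairing form_axioms_unique by blast
next
  fix B :: "'d H \<Rightarrow> 'd H \<Rightarrow> rat"
  assume "form_axioms B"
  then have B: "B = pairing"
    by (rule form_axioms_unique)
  show "B x y = 0" if "homogeneous n x \<and> homogeneous m y \<and> n \<noteq> m" for n m x y
    using that B pairing_homogeneous by blast
  show "B x y = B y x" for x y
    using B pairing_sym by simp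
  show "x = 0" if "\<forall>y. B x y = 0" for x
    using that B by (intro pairing_basis_eq_0_imp_eq_0) simp
  show "y = 0" if "\<forall>x. B x y = 0" for y
    using that B by (intro pairing_basis_eq_0_imp_eq_0) (simp add: pairing_sym[of y])
  show "B (antipode x) y = B x (antipode y)" for x y
    using B pairing_antipode by simp
  show "\<exists>e :: 'd forest \<Rightarrow> 'd H. \<forall>F G. B (e F) (basis G) = (if F = G then 1 else 0)"
    using B pairing_dual_basis_basis by blast
  fix e :: "'d forest \<Rightarrow> 'd H"
  assume "\<forall>F G. B (e F) (basis G) = (if F = G then 1 else 0)"
  then have e: "e = dual_basis"
    using B dual_basis_unique by blast
  show "is_basis_of UNIV e" and "homogeneous (weight F) (e F)" for F
    using e is_basis_of_dual_basis homogeneous_dual_basis by simp_all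
  show "is_basis_of {x. primitive x} (\<lambda>t :: 'd ptree. e [t])"
    and "Delta (e ts) = (\<Sum>i = 0..length ts. tensor (e (take i ts)) (e (drop i ts)))" for ts
    using e is_basis_of_primitive Delta_dual_basis by simp_all
qed

end
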